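(* Let $S$ be a ring, $R$ a noetherian $S$-algebra, $\boldsymbol a=(a_1,\dots,a_n)$ and $\boldsymbol b=(b_1,\dots,b_n)$ sequences in $R$ with $\boldsymbol b$ regular, and $W=\sum_ia_ib_i$. Let $F=\bigoplus_iR\theta_i$, $\delta_+=(\sum_ib_i\theta_i^* )\lrcorner(-)$, $\delta_-=(\sum_ia_i\theta_i)\wedge(-)$ on $\bigwedge F$, and $\pi:(\bigwedge F,\delta_+)\to R/(\boldsymbol b)$ the projection onto $\bigwedge^0F=R$ followed by the quotient map. Suppose given an $S$-linear morphism of complexes $\sigma:R/(\boldsymbol b)\to(\bigwedge F,\delta_+)$ and an $S$-linear map $h$ on $\bigwedge F$ of degree $-1$ with $\delta_+h+h\delta_+=1-\sigma\pi$, $h^2=0$ and $h\sigma=0$. Let $X$ be a finite-rank matrix factorisation of $V\in R$ over $R$ such that $V+W$ lies in the image of the structure map $S\to R$; extend $h,\sigma$ to $S$-linear maps on/between $X\otimes_R\bigwedge F$ and $X\otimes_RR/(\boldsymbol b)$ using a homogeneous $R$-basis of $X$ (with Koszul signs), and set $\mu=d_X\otimes1+1\otimes\delta_-$ and $\sigma_\infty=\sum_{m\ge0}(-1)^m(h\mu)^m\sigma$. Then there is a deformation retract datum of linear factorisations of $V+W$ over $S$ $$(X\otimes_RR/(\boldsymbol b),\,d_X\otimes1)\ \underset{1\otimes\pi}{\overset{\sigma_\infty}{\rightleftarrows}}\ (X\otimes_R\textstyle\bigwedge F,\,1\otimes\delta_++\mu),\qquad h_\infty .$$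
   Context: A linear factorisation of $U$ over a ring $T$ is a $\mathbb{Z}_2$-graded $T$-module (not necessarily free) with an odd $T$-linear differential squaring to multiplication by $U$; morphisms are even maps commuting with the differentials. The symbols $\theta_i$ have odd degree (cohomological degree $-1$), so $\bigwedge F$ is $\mathbb{Z}$-graded with $\delta_\pm$ of degree $\pm1$; $(\bigwedge F,\delta_+)$ is the Koszul complex of $\boldsymbol b$. A deformation retract datum consists of morphisms of linear factorisations $\iota:M\to L$ (here $\sigma_\infty$) and $p:L\to M$ (here $1\otimes\pi$) with $p\iota=1_M$, together with an odd map $h_\infty$ on $L$ with $d_Lh_\infty+h_\infty d_L=1-\iota p$. *)

theory Defs
  imports Main "HOL-Library.Function_Algebras"
begin

definition is_ideal :: "'r::comm_ring_1 set \<Rightarrow> bool" where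
  "is_ideal I \<longleftrightarrow> 0 \<in> I \<and> (\<forall>x\<in>I. \<forall>y\<in>I. x + y \<in> I) \<and> (\<forall>r. \<forall>x\<in>I. r * x \<in> I)"

definition noetherian_ring :: "'r::comm_ring_1 itself \<Rightarrow> bool" where
  "noetherian_ring _ \<longleftrightarrow>
     (\<forall>I :: nat \<Rightarrow> 'r set. (\<forall>k. is_ideal (I k)) \<and> (\<forall>k. I k \<subseteq> I (Suc k))
        \<longrightarrow> (\<exists>N. \<forall>m\<ge>N. I m = I N))"

definition seq_ideal :: "(nat \<Rightarrow> 'r::comm_ring_1) \<Rightarrow> nat \<Rightarrow> 'r set" where
  "seq_ideal b k = {x. \<exists>c. x = (\<Sum>i<k. c i * b i)}"

definition regular_seq :: "(nat \<Rightarrow> 'r::comm_ring_1) \<Rightarrow> nat \<Rightarrow> bool" where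
  "regular_seq b n \<longleftrightarrow>
     (\<forall>i<n. \<forall>x. b i * x \<in> seq_ideal b i \<longrightarrow> x \<in> seq_ideal b i) \<and> 1 \<notin> seq_ideal b n"

definition ring_hom_into :: "('s::comm_ring_1 \<Rightarrow> 'r::comm_ring_1) \<Rightarrow> bool" where
  "ring_hom_into \<phi> \<longleftrightarrow> \<phi> 1 = 1 \<and> (\<forall>x y. \<phi> (x + y) = \<phi> x + \<phi> y) \<and> (\<forall>x y. \<phi> (x * y) = \<phi> x * \<phi> y)"

text \<open>An element of the exterior algebra is a coefficient function on finite subsets
  I of {0..<n}; I stands for theta_{i1} wedge ... wedge theta_{ik}, i1 < ... < ik,
  which lies in cohomological degree -card I.\<close>

definition ext_carrier :: "nat \<Rightarrow> (nat set \<Rightarrow> 'r::zero) set" where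
  "ext_carrier n = {\<omega>. \<forall>I. \<not> I \<subseteq> {..<n} \<longrightarrow> \<omega> I = 0}"

text \<open>theta_i wedge theta_I = ext_sign i I * theta_{I + i}  (i not in I), and
  theta_i^* contracted into theta_I = ext_sign i (I - i) * theta_{I - i}  (i in I).\<close>
definition ext_sign :: "nat \<Rightarrow> nat set \<Rightarrow> 'r::comm_ring_1" where
  "ext_sign i I = (-1) ^ card {j\<in>I. j < i}"

text \<open>delta_plus = (sum_i b_i theta_i^*) contracted into (-).\<close>
definition delta_plus :: "nat \<Rightarrow> (nat \<Rightarrow> 'r::comm_ring_1) \<Rightarrow> (nat set \<Rightarrow> 'r) \<Rightarrow> nat set \<Rightarrow> 'r" where
  "delta_plus n b \<omega> = (\<lambda>J. if J \<subseteq> {..<n}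
       then (\<Sum>i\<in>{..<n} - J. b i * ext_sign i J * \<omega> (insert i J)) else 0)"

text \<open>delta_minus = (sum_i a_i theta_i) wedge (-).\<close>
definition delta_minus :: "nat \<Rightarrow> (nat \<Rightarrow> 'r::comm_ring_1) \<Rightarrow> (nat set \<Rightarrow> 'r) \<Rightarrow> nat set \<Rightarrow> 'r" where
  "delta_minus n a \<omega> = (\<lambda>J. if J \<subseteq> {..<n}
       then (\<Sum>i\<in>J. a i * ext_sign i (J - {i}) * \<omega> (J - {i})) else 0)"

text \<open>Projection onto wedge^0 F = R; composing with R -> R/(b) gives pi
  (elements of R/(b) are represented by elements of R).\<close>
definition ext_proj :: "(nat set \<Rightarrow> 'r) \<Rightarrow> 'r" where
  "ext_proj \<omega> = \<omega> {}"

definition ext_homog :: "nat \<Rightarrow> (nat set \<Rightarrow> 'r::zero) \<Rightarrow> bool" where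
  "ext_homog k \<omega> \<longleftrightarrow> (\<forall>I. card I \<noteq> k \<longrightarrow> \<omega> I = 0)"

definition slin_ext :: "('s \<Rightarrow> 'r::comm_ring_1) \<Rightarrow> nat \<Rightarrow> ((nat set \<Rightarrow> 'r) \<Rightarrow> nat set \<Rightarrow> 'r) \<Rightarrow> bool" where
  "slin_ext \<phi> n f \<longleftrightarrow> (\<forall>\<omega>\<in>ext_carrier n. f \<omega> \<in> ext_carrier n) \<and>
     (\<forall>\<omega>\<in>ext_carrier n. \<forall>\<omega>'\<in>ext_carrier n. f (\<omega> + \<omega>') = f \<omega> + f \<omega>') \<and>
     (\<forall>s. \<forall>\<omega>\<in>ext_carrier n. f (\<lambda>I. \<phi> s * \<omega> I) = (\<lambda>I. \<phi> s * f \<omega> I))"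

text \<open>Map of cohomological degree -1 on the exterior algebra: wedge^k F -> wedge^(k+1) F.\<close>
definition ext_deg_minus_one :: "nat \<Rightarrow> ((nat set \<Rightarrow> 'r::zero) \<Rightarrow> nat set \<Rightarrow> 'r) \<Rightarrow> bool" where
  "ext_deg_minus_one n f \<longleftrightarrow> (\<forall>k. \<forall>\<omega>\<in>ext_carrier n. ext_homog k \<omega> \<longrightarrow> ext_homog (Suc k) (f \<omega>))"

text \<open>sigma : R/(b) -> (wedge F, delta_plus) is an S-linear morphism of complexes
  (R/(b) concentrated in degree 0 with zero differential); sigma is given on representatives.\<close>
definition koszul_section ::
  "('s \<Rightarrow> 'r::comm_ring_1) \<Rightarrow> nat \<Rightarrow> (nat \<Rightarrow> 'r) \<Rightarrow> ('r \<Rightarrow> nat set \<Rightarrow> 'r) \<Rightarrow> bool" where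
  "koszul_section \<phi> n b \<sigma> \<longleftrightarrow>
     (\<forall>x y. x - y \<in> seq_ideal b n \<longrightarrow> \<sigma> x = \<sigma> y) \<and>
     (\<forall>x y. \<sigma> (x + y) = \<sigma> x + \<sigma> y) \<and>
     (\<forall>s x. \<sigma> (\<phi> s * x) = (\<lambda>I. \<phi> s * \<sigma> x I)) \<and>
     (\<forall>x. \<sigma> x \<in> ext_carrier n \<and> ext_homog 0 (\<sigma> x) \<and> delta_plus n b (\<sigma> x) = 0)"

text \<open>A finite-rank matrix factorisation X of V over R, given by a finite homogeneous basis B
  (par e = True means e is odd) and the matrix D of d_X (d_X e = sum_f D f e * f).\<close>
definition matrix_factorisation :: "'x set \<Rightarrow> ('x \<Rightarrow> bool) \<Rightarrow> ('x \<Rightarrow> 'x \<Rightarrow> 'r::comm_ring_1) \<Rightarrow> 'r \<Rightarrow> bool" where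
  "matrix_factorisation B par D V \<longleftrightarrow> finite B \<and>
     (\<forall>e\<in>B. \<forall>f\<in>B. par e = par f \<longrightarrow> D f e = 0) \<and>
     (\<forall>e\<in>B. \<forall>f\<in>B. (\<Sum>g\<in>B. D f g * D g e) = (if f = e then V else 0))"

text \<open>L = X (x) wedge F: z e I is the coefficient of e (x) theta_I.\<close>
definition L_carrier :: "'x set \<Rightarrow> nat \<Rightarrow> ('x \<Rightarrow> nat set \<Rightarrow> 'r::zero) set" where
  "L_carrier B n = {z. \<forall>e I. (e \<notin> B \<or> \<not> I \<subseteq> {..<n}) \<longrightarrow> z e I = 0}"

text \<open>M = X (x) R/(b): y e is a representative in R of the coefficient of e; two elements
  are equal when all coefficients agree modulo Q = (b).\<close>
definition M_carrier :: "'x set \<Rightarrow> ('x \<Rightarrow> 'r::zero) set" where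
  "M_carrier B = {y. \<forall>e. e \<notin> B \<longrightarrow> y e = 0}"

definition M_eq :: "'r::comm_ring_1 set \<Rightarrow> 'x set \<Rightarrow> ('x \<Rightarrow> 'r) \<Rightarrow> ('x \<Rightarrow> 'r) \<Rightarrow> bool" where
  "M_eq Q B y y' \<longleftrightarrow> (\<forall>e\<in>B. y e - y' e \<in> Q)"

text \<open>Z/2-parity (True = odd) of homogeneous elements.\<close>
definition L_homog :: "'x set \<Rightarrow> ('x \<Rightarrow> bool) \<Rightarrow> bool \<Rightarrow> ('x \<Rightarrow> nat set \<Rightarrow> 'r::zero) \<Rightarrow> bool" where
  "L_homog B par p z \<longleftrightarrow> (\<forall>e I. ((par e \<noteq> odd (card I)) \<noteq> p) \<longrightarrow> z e I = 0)"

definition M_homog :: "'x set \<Rightarrow> ('x \<Rightarrow> bool) \<Rightarrow> bool \<Rightarrow> ('x \<Rightarrow> 'r::zero) \<Rightarrow> bool" where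
  "M_homog B par p y \<longleftrightarrow> (\<forall>e. par e \<noteq> p \<longrightarrow> y e = 0)"

definition ksign :: "('x \<Rightarrow> bool) \<Rightarrow> 'x \<Rightarrow> 'r::comm_ring_1" where
  "ksign par e = (if par e then -1 else 1)"

text \<open>1 (x) f for an odd map f on wedge F, with Koszul sign: e (x) w |-> (-1)^|e| e (x) f w.\<close>
definition odd_ext :: "'x set \<Rightarrow> ('x \<Rightarrow> bool) \<Rightarrow> ((nat set \<Rightarrow> 'r::comm_ring_1) \<Rightarrow> nat set \<Rightarrow> 'r)
    \<Rightarrow> ('x \<Rightarrow> nat set \<Rightarrow> 'r) \<Rightarrow> 'x \<Rightarrow> nat set \<Rightarrow> 'r" where
  "odd_ext B par f z = (\<lambda>e I. if e \<in> B then ksign par e * f (z e) I else 0)"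

definition dX_L :: "'x set \<Rightarrow> ('x \<Rightarrow> 'x \<Rightarrow> 'r::comm_ring_1) \<Rightarrow> ('x \<Rightarrow> nat set \<Rightarrow> 'r) \<Rightarrow> 'x \<Rightarrow> nat set \<Rightarrow> 'r" where
  "dX_L B D z = (\<lambda>f I. if f \<in> B then (\<Sum>e\<in>B. D f e * z e I) else 0)"

definition dX_M :: "'x set \<Rightarrow> ('x \<Rightarrow> 'x \<Rightarrow> 'r::comm_ring_1) \<Rightarrow> ('x \<Rightarrow> 'r) \<Rightarrow> 'x \<Rightarrow> 'r" where
  "dX_M B D y = (\<lambda>f. if f \<in> B then (\<Sum>e\<in>B. D f e * y e) else 0)"

definition mu_map :: "'x set \<Rightarrow> ('x \<Rightarrow> bool) \<Rightarrow> ('x \<Rightarrow> 'x \<Rightarrow> 'r::comm_ring_1) \<Rightarrow> nat \<Rightarrow> (nat \<Rightarrow> 'r)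
    \<Rightarrow> ('x \<Rightarrow> nat set \<Rightarrow> 'r) \<Rightarrow> 'x \<Rightarrow> nat set \<Rightarrow> 'r" where
  "mu_map B par D n a z = dX_L B D z + odd_ext B par (delta_minus n a) z"

definition d_L :: "'x set \<Rightarrow> ('x \<Rightarrow> bool) \<Rightarrow> ('x \<Rightarrow> 'x \<Rightarrow> 'r::comm_ring_1) \<Rightarrow> nat \<Rightarrow> (nat \<Rightarrow> 'r) \<Rightarrow> (nat \<Rightarrow> 'r)
    \<Rightarrow> ('x \<Rightarrow> nat set \<Rightarrow> 'r) \<Rightarrow> 'x \<Rightarrow> nat set \<Rightarrow> 'r" where
  "d_L B par D n a b z = odd_ext B par (delta_plus n b) z + mu_map B par D n a z"

definition p_map :: "('x \<Rightarrow> nat set \<Rightarrow> 'r) \<Rightarrow> 'x \<Rightarrow> 'r" where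
  "p_map z = (\<lambda>e. ext_proj (z e))"

text \<open>1 (x) sigma : M -> L (sigma is even, so no sign).\<close>
definition sigma_X :: "'x set \<Rightarrow> ('r \<Rightarrow> nat set \<Rightarrow> 'r::zero) \<Rightarrow> ('x \<Rightarrow> 'r) \<Rightarrow> 'x \<Rightarrow> nat set \<Rightarrow> 'r" where
  "sigma_X B \<sigma> y = (\<lambda>e. if e \<in> B then \<sigma> (y e) else (\<lambda>I. 0))"

text \<open>sigma_infinity = sum_{m>=0} (-1)^m (h mu)^m sigma. Since h raises the exterior degree by one
  and mu does not lower it, (h mu)^m sigma = 0 for m > n, so the sum is the finite sum over m <= n.\<close>
definition sigma_inf :: "'x set \<Rightarrow> ('x \<Rightarrow> bool) \<Rightarrow> ('x \<Rightarrow> 'x \<Rightarrow> 'r::comm_ring_1) \<Rightarrow> nat \<Rightarrow> (nat \<Rightarrow> 'r)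
    \<Rightarrow> ((nat set \<Rightarrow> 'r) \<Rightarrow> nat set \<Rightarrow> 'r) \<Rightarrow> ('r \<Rightarrow> nat set \<Rightarrow> 'r) \<Rightarrow> ('x \<Rightarrow> 'r) \<Rightarrow> 'x \<Rightarrow> nat set \<Rightarrow> 'r" where
  "sigma_inf B par D n a h \<sigma> y =
     (\<Sum>m\<le>n. (\<lambda>e I. (-1) ^ m * ((odd_ext B par h \<circ> mu_map B par D n a) ^^ m) (sigma_X B \<sigma> y) e I))"

definition slin_LL :: "('s \<Rightarrow> 'r::comm_ring_1) \<Rightarrow> 'x set \<Rightarrow> nat
    \<Rightarrow> (('x \<Rightarrow> nat set \<Rightarrow> 'r) \<Rightarrow> 'x \<Rightarrow> nat set \<Rightarrow> 'r) \<Rightarrow> bool" where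
  "slin_LL \<phi> B n f \<longleftrightarrow> (\<forall>z\<in>L_carrier B n. f z \<in> L_carrier B n) \<and>
     (\<forall>z\<in>L_carrier B n. \<forall>w\<in>L_carrier B n. f (z + w) = f z + f w) \<and>
     (\<forall>s. \<forall>z\<in>L_carrier B n. f (\<lambda>e I. \<phi> s * z e I) = (\<lambda>e I. \<phi> s * f z e I))"

definition slin_MM :: "('s \<Rightarrow> 'r::comm_ring_1) \<Rightarrow> 'r set \<Rightarrow> 'x set
    \<Rightarrow> (('x \<Rightarrow> 'r) \<Rightarrow> 'x \<Rightarrow> 'r) \<Rightarrow> bool" where
  "slin_MM \<phi> Q B f \<longleftrightarrow> (\<forall>y\<in>M_carrier B. f y \<in> M_carrier B) \<and>
     (\<forall>y\<in>M_carrier B. \<forall>y'\<in>M_carrier B. M_eq Q B y y' \<longrightarrow> M_eq Q B (f y) (f y')) \<and>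
     (\<forall>y\<in>M_carrier B. \<forall>y'\<in>M_carrier B. M_eq Q B (f (y + y')) (f y + f y')) \<and>
     (\<forall>s. \<forall>y\<in>M_carrier B. M_eq Q B (f (\<lambda>e. \<phi> s * y e)) (\<lambda>e. \<phi> s * f y e))"

definition slin_ML :: "('s \<Rightarrow> 'r::comm_ring_1) \<Rightarrow> 'r set \<Rightarrow> 'x set \<Rightarrow> nat
    \<Rightarrow> (('x \<Rightarrow> 'r) \<Rightarrow> 'x \<Rightarrow> nat set \<Rightarrow> 'r) \<Rightarrow> bool" where
  "slin_ML \<phi> Q B n f \<longleftrightarrow> (\<forall>y\<in>M_carrier B. f y \<in> L_carrier B n) \<and>
     (\<forall>y\<in>M_carrier B. \<forall>y'\<in>M_carrier B. M_eq Q B y y' \<longrightarrow> f y = f y') \<and>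
     (\<forall>y\<in>M_carrier B. \<forall>y'\<in>M_carrier B. f (y + y') = f y + f y') \<and>
     (\<forall>s. \<forall>y\<in>M_carrier B. f (\<lambda>e. \<phi> s * y e) = (\<lambda>e I. \<phi> s * f y e I))"

definition slin_LM :: "('s \<Rightarrow> 'r::comm_ring_1) \<Rightarrow> 'r set \<Rightarrow> 'x set \<Rightarrow> nat
    \<Rightarrow> (('x \<Rightarrow> nat set \<Rightarrow> 'r) \<Rightarrow> 'x \<Rightarrow> 'r) \<Rightarrow> bool" where
  "slin_LM \<phi> Q B n f \<longleftrightarrow> (\<forall>z\<in>L_carrier B n. f z \<in> M_carrier B) \<and>
     (\<forall>z\<in>L_carrier B n. \<forall>w\<in>L_carrier B n. M_eq Q B (f (z + w)) (f z + f w)) \<and>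
     (\<forall>s. \<forall>z\<in>L_carrier B n. M_eq Q B (f (\<lambda>e I. \<phi> s * z e I)) (\<lambda>e. \<phi> s * f z e))"

definition retract_datum :: "('s \<Rightarrow> 'r::comm_ring_1) \<Rightarrow> 'r set \<Rightarrow> 'x set \<Rightarrow> ('x \<Rightarrow> bool) \<Rightarrow> nat \<Rightarrow> 'r
    \<Rightarrow> (('x \<Rightarrow> nat set \<Rightarrow> 'r) \<Rightarrow> 'x \<Rightarrow> nat set \<Rightarrow> 'r) \<Rightarrow> (('x \<Rightarrow> 'r) \<Rightarrow> 'x \<Rightarrow> 'r)
    \<Rightarrow> (('x \<Rightarrow> 'r) \<Rightarrow> 'x \<Rightarrow> nat set \<Rightarrow> 'r) \<Rightarrow> (('x \<Rightarrow> nat set \<Rightarrow> 'r) \<Rightarrow> 'x \<Rightarrow> 'r)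
    \<Rightarrow> (('x \<Rightarrow> nat set \<Rightarrow> 'r) \<Rightarrow> 'x \<Rightarrow> nat set \<Rightarrow> 'r) \<Rightarrow> bool" where
  "retract_datum \<phi> Q B par n U dL dM \<iota> p hh \<longleftrightarrow>
     \<comment> \<open>(L, dL) is a linear factorisation of U over S\<close>
     slin_LL \<phi> B n dL \<and>
     (\<forall>q. \<forall>z\<in>L_carrier B n. L_homog B par q z \<longrightarrow> L_homog B par (\<not> q) (dL z)) \<and>
     (\<forall>z\<in>L_carrier B n. dL (dL z) = (\<lambda>e I. U * z e I)) \<and>
     \<comment> \<open>(M, dM) is a linear factorisation of U over S\<close>
     slin_MM \<phi> Q B dM \<and>
     (\<forall>q. \<forall>y\<in>M_carrier B. M_homog B par q y \<longrightarrow> M_homog B par (\<not> q) (dM y)) \<and>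
     (\<forall>y\<in>M_carrier B. M_eq Q B (dM (dM y)) (\<lambda>e. U * y e)) \<and>
     \<comment> \<open>iota is a morphism of linear factorisations\<close>
     slin_ML \<phi> Q B n \<iota> \<and>
     (\<forall>q. \<forall>y\<in>M_carrier B. M_homog B par q y \<longrightarrow> L_homog B par q (\<iota> y)) \<and>
     (\<forall>y\<in>M_carrier B. dL (\<iota> y) = \<iota> (dM y)) \<and>
     \<comment> \<open>p is a morphism of linear factorisations\<close>
     slin_LM \<phi> Q B n p \<and>
     (\<forall>q. \<forall>z\<in>L_carrier B n. L_homog B par q z \<longrightarrow> M_homog B par q (p z)) \<and>
     (\<forall>z\<in>L_carrier B n. M_eq Q B (p (dL z)) (dM (p z))) \<and>
     \<comment> \<open>p iota = 1\<close>
     (\<forall>y\<in>M_carrier B. M_eq Q B (p (\<iota> y)) y) \<and>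
     \<comment> \<open>the homotopy\<close>
     slin_LL \<phi> B n hh \<and>
     (\<forall>q. \<forall>z\<in>L_carrier B n. L_homog B par q z \<longrightarrow> L_homog B par (\<not> q) (hh z)) \<and>
     (\<forall>z\<in>L_carrier B n. dL (hh z) + hh (dL z) = z - \<iota> (p z))"

end

theory Submission
  imports Defs
begin

text \<open>This is an instance of the homological perturbation lemma. Tensoring the contraction
  \<open>(\<sigma>, \<pi>, h)\<close> of the Koszul complex onto \<open>R/(b)\<close> with \<open>X\<close> gives a contraction of
  \<open>(X \<otimes> \<And>F, 1 \<otimes> \<delta>\<^sub>+)\<close>; the remaining part \<open>\<mu>\<close> of the differential is a perturbation, and
  \<open>h\<mu>\<close> is nilpotent because \<open>h\<close> raises exterior degree while \<open>\<mu>\<close> does not lower it.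
  Hence \<open>1 + h\<mu>\<close> is invertible with inverse the finite Neumann series, and the perturbed
  maps \<open>\<sigma>\<^sub>\<infinity> = (1 + h\<mu>)\<inverse>\<sigma>\<close>, \<open>h\<^sub>\<infinity> = (1 + h\<mu>)\<inverse>h\<close> form a deformation retract. On the
  small side the perturbation only adds \<open>d\<^sub>X \<otimes> 1\<close>, because \<open>\<pi> \<mu> \<sigma>\<close> sees only \<open>d\<^sub>X\<close> modulo \<open>(b)\<close>
  and \<open>\<pi>\<mu>h = 0\<close> for degree reasons.\<close>

section \<open>Perturbation by a nilpotent \<open>h\<mu>\<close>\<close>

definition minus_one_pow :: "nat \<Rightarrow> 'a::ab_group_add \<Rightarrow> 'a" where
  "minus_one_pow m x = (if even m then x else - x)"

text \<open>Unlike in the general perturbation lemma, \<open>p\<close> is not perturbed: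
  \<open>p h = 0\<close> and \<open>p \<mu> h = 0\<close> already make it compatible with the perturbed data.\<close>
locale homological_perturbation =
  fixes L :: "'l::ab_group_add set"
    and d0 \<mu> h U :: "'l \<Rightarrow> 'l" and \<iota> :: "'m::ab_group_add \<Rightarrow> 'l" and p :: "'l \<Rightarrow> 'm" and n :: nat
  assumes L_zero: "0 \<in> L" and L_add: "x \<in> L \<Longrightarrow> y \<in> L \<Longrightarrow> x + y \<in> L"
    and L_uminus: "x \<in> L \<Longrightarrow> - x \<in> L"
    and d0_L: "x \<in> L \<Longrightarrow> d0 x \<in> L" and d0_add: "x \<in> L \<Longrightarrow> y \<in> L \<Longrightarrow> d0 (x + y) = d0 x + d0 y"
    and mu_L: "x \<in> L \<Longrightarrow> \<mu> x \<in> L" and mu_add: "x \<in> L \<Longrightarrow> y \<in> L \<Longrightarrow> \<mu> (x + y) = \<mu> x + \<mu> y"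
    and h_L: "x \<in> L \<Longrightarrow> h x \<in> L" and h_add: "x \<in> L \<Longrightarrow> y \<in> L \<Longrightarrow> h (x + y) = h x + h y"
    and U_L: "x \<in> L \<Longrightarrow> U x \<in> L" and U_add: "x \<in> L \<Longrightarrow> y \<in> L \<Longrightarrow> U (x + y) = U x + U y"
    and iota_L: "\<iota> u \<in> L" and iota_add: "\<iota> (u + v) = \<iota> u + \<iota> v"
    and p_add: "x \<in> L \<Longrightarrow> y \<in> L \<Longrightarrow> p (x + y) = p x + p y"
    and d0_d0: "x \<in> L \<Longrightarrow> d0 (d0 x) = 0"
    and d0_iota: "d0 (\<iota> u) = 0"
    and homotopy: "x \<in> L \<Longrightarrow> d0 (h x) + h (d0 x) = x - \<iota> (p x)"
    and h_h: "x \<in> L \<Longrightarrow> h (h x) = 0" and h_iota: "h (\<iota> u) = 0"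
    and p_h: "x \<in> L \<Longrightarrow> p (h x) = 0" and p_mu_h: "x \<in> L \<Longrightarrow> p (\<mu> (h x)) = 0"
    and curvature: "x \<in> L \<Longrightarrow> d0 (d0 x) + d0 (\<mu> x) + \<mu> (d0 x) + \<mu> (\<mu> x) = U x"
    and h_U: "x \<in> L \<Longrightarrow> h (U x) = U (h x)"
    and nilpotent: "x \<in> L \<Longrightarrow> ((\<lambda>z. h (\<mu> z)) ^^ Suc n) x = 0"
begin

definition hmu :: "'l \<Rightarrow> 'l" where
  "hmu x = h (\<mu> x)"

definition neumann :: "'l \<Rightarrow> 'l" where
  "neumann x = (\<Sum>m\<le>n. minus_one_pow m ((hmu ^^ m) x))"

lemma additive_zero:
  assumes "\<And>x y. x \<in> L \<Longrightarrow> y \<in> L \<Longrightarrow> f (x + y) = f x + (f y :: 'a::ab_group_add)"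
  shows "f 0 = 0"
  using assms[OF L_zero L_zero] by simp

lemma additive_uminus:
  assumes "\<And>x y. x \<in> L \<Longrightarrow> y \<in> L \<Longrightarrow> f (x + y) = f x + (f y :: 'a::ab_group_add)" and "x \<in> L"
  shows "f (- x) = - f x"
  using assms(1)[OF assms(2) L_uminus[OF assms(2)]] additive_zero[OF assms(1)]
  by (simp add: eq_neg_iff_add_eq_0 add.commute)

lemma additive_diff:
  assumes "\<And>x y. x \<in> L \<Longrightarrow> y \<in> L \<Longrightarrow> f (x + y) = f x + (f y :: 'a::ab_group_add)"
    and "x \<in> L" "y \<in> L"
  shows "f (x - y) = f x - f y"
  using assms(1)[OF assms(2) L_uminus[OF assms(3)]] additive_uminus[OF assms(1,3)] by simp

lemma additive_minus_one_pow:
  assumes "\<And>x y. x \<in> L \<Longrightarrow> y \<in> L \<Longrightarrow> f (x + y) = f x + (f y :: 'a::ab_group_add)" and "x \<in> L"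
  shows "f (minus_one_pow m x) = minus_one_pow m (f x)"
  using additive_uminus[OF assms] by (simp add: minus_one_pow_def)

lemma sum_L: "finite K \<Longrightarrow> (\<And>i. i \<in> K \<Longrightarrow> g i \<in> L) \<Longrightarrow> sum g K \<in> L"
  by (induction K rule: finite_induct) (auto simp: L_zero L_add)

lemma additive_sum:
  assumes "\<And>x y. x \<in> L \<Longrightarrow> y \<in> L \<Longrightarrow> f (x + y) = f x + (f y :: 'a::ab_group_add)"
  shows "finite K \<Longrightarrow> (\<And>i. i \<in> K \<Longrightarrow> g i \<in> L) \<Longrightarrow> f (sum g K) = (\<Sum>i\<in>K. f (g i))"
proof (induction K rule: finite_induct)
  case empty
  then show ?case using additive_zero[OF assms] by simp
next
  case (insert x K)
  then show ?case by (simp add: assms sum_L)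
qed

lemma L_diff: "x \<in> L \<Longrightarrow> y \<in> L \<Longrightarrow> x - y \<in> L"
  by (metis L_add L_uminus diff_conv_add_uminus)

lemma minus_one_pow_L: "x \<in> L \<Longrightarrow> minus_one_pow m x \<in> L"
  by (simp add: minus_one_pow_def L_uminus)

lemma hmu_L: "x \<in> L \<Longrightarrow> hmu x \<in> L"
  by (simp add: hmu_def h_L mu_L)

lemma hmu_add: "x \<in> L \<Longrightarrow> y \<in> L \<Longrightarrow> hmu (x + y) = hmu x + hmu y"
  by (simp add: hmu_def mu_add h_add mu_L)

lemma hmu_pow_L: "x \<in> L \<Longrightarrow> (hmu ^^ m) x \<in> L"
  by (induction m) (auto simp: hmu_L)

lemma hmu_pow_add: "x \<in> L \<Longrightarrow> y \<in> L \<Longrightarrow> (hmu ^^ m) (x + y) = (hmu ^^ m) x + (hmu ^^ m) y"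
  by (induction m) (auto simp: hmu_add hmu_pow_L)

lemma hmu_nilpotent: "x \<in> L \<Longrightarrow> (hmu ^^ Suc n) x = 0"
  using nilpotent by (simp add: hmu_def[abs_def])

lemma neumann_L: "x \<in> L \<Longrightarrow> neumann x \<in> L"
  unfolding neumann_def by (auto intro!: sum_L minus_one_pow_L hmu_pow_L)

lemma neumann_add: "x \<in> L \<Longrightarrow> y \<in> L \<Longrightarrow> neumann (x + y) = neumann x + neumann y"
  unfolding neumann_def
  by (simp add: hmu_pow_add sum.distrib[symmetric]) (rule sum.cong, auto simp: minus_one_pow_def)

text \<open>The sum telescopes, and the last term vanishes by nilpotency.\<close>
lemma neumann_right_inverse:
  assumes c: "c \<in> L"
  shows "neumann c + hmu (neumann c) = c"
proof -
  have "hmu (neumann c) = (\<Sum>m\<le>n. minus_one_pow m ((hmu ^^ Suc m) c))"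
    unfolding neumann_def
    by (subst additive_sum[OF hmu_add])
      (auto simp: c minus_one_pow_L hmu_pow_L additive_minus_one_pow[OF hmu_add])
  then have "neumann c + hmu (neumann c)
      = (\<Sum>m\<le>n. minus_one_pow m ((hmu ^^ m) c) - minus_one_pow (Suc m) ((hmu ^^ Suc m) c))"
    unfolding neumann_def
    by (simp add: sum.distrib[symmetric] del: funpow.simps)
      (rule sum.cong, auto simp: minus_one_pow_def)
  also have "\<dots> = minus_one_pow 0 ((hmu ^^ 0) c) - minus_one_pow (Suc n) ((hmu ^^ Suc n) c)"
    by (rule sum_telescope)
  finally show ?thesis
    using hmu_nilpotent[OF c] by (simp add: minus_one_pow_def)
qed

lemma one_plus_hmu_inj:
  assumes x: "x \<in> L" and y: "y \<in> L" and eq: "x + hmu x = y + hmu y"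
  shows "x = y"
proof -
  define z where "z = x - y"
  have z: "z \<in> L"
    using x y by (simp add: z_def L_diff)
  have "z + hmu z = 0"
    using eq by (simp add: z_def additive_diff[OF hmu_add] x y algebra_simps)
  then have hmu_z: "hmu z = - z"
    by (simp add: eq_neg_iff_add_eq_0 add.commute)
  have "(hmu ^^ m) z = minus_one_pow m z" for m
  proof (induction m)
    case 0
    then show ?case by (simp add: minus_one_pow_def)
  next
    case (Suc m)
    then show ?case
      by (simp add: additive_minus_one_pow[OF hmu_add z] hmu_z)
        (simp add: minus_one_pow_def)
  qed
  then have "z = 0"
    using hmu_nilpotent[OF z] by (metis minus_one_pow_def neg_equal_0_iff_equal)
  then show ?thesis
    by (simp add: z_def)
qed

lemma neumann_left_inverse:
  assumes x: "x \<in> L"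
  shows "neumann (x + hmu x) = x"
proof -
  have x_hmu_x: "x + hmu x \<in> L"
    using x by (simp add: L_add hmu_L)
  show ?thesis
    using one_plus_hmu_inj[OF neumann_L[OF x_hmu_x] x neumann_right_inverse[OF x_hmu_x]] .
qed

lemma iota_zero: "\<iota> 0 = 0"
  using iota_add[of 0 0] by simp

text \<open>For \<open>s = neumann c\<close> one has \<open>h s = 0\<close>; the homotopy identity applied to \<open>\<mu> s\<close>
  together with the curvature equation gives \<open>(1 + h\<mu>)(d0 + \<mu>) s = d0 c + \<iota> p \<mu> c\<close>.\<close>
lemma neumann_differential:
  assumes c: "c \<in> L" and hc: "h c = 0"
  shows "d0 (neumann c) + \<mu> (neumann c) = neumann (d0 c + \<iota> (p (\<mu> c)))"
proof -
  define s where "s = neumann c"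
  have s: "s \<in> L" and mu_s: "\<mu> s \<in> L" and hmu_s: "hmu s \<in> L"
    using c by (simp_all add: s_def neumann_L mu_L hmu_L)
  have ds: "d0 s + \<mu> s \<in> L"
    using s by (simp add: L_add d0_L mu_L)
  have s_eq: "s = c - hmu s"
    using neumann_right_inverse[OF c] by (simp add: s_def eq_diff_eq)
  have hs: "h s = 0"
    using additive_diff[OF h_add c hmu_s] h_h[OF mu_s] hc s_eq by (simp add: hmu_def)
  have d0_s: "d0 s = d0 c - d0 (h (\<mu> s))"
    using additive_diff[OF d0_add c hmu_s] s_eq by (simp add: hmu_def)
  have p_mu_s: "p (\<mu> s) = p (\<mu> c)"
    using s_eq additive_diff[OF mu_add c hmu_s]
      additive_diff[OF p_add mu_L[OF c] mu_L[OF hmu_s]] p_mu_h[OF mu_s]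
    by (simp add: hmu_def)
  have "\<mu> (d0 s) + d0 (\<mu> s) = U s - \<mu> (\<mu> s)"
    using curvature[OF s] d0_d0[OF s] by (simp add: algebra_simps)
  then have "d0 (\<mu> s) = U s - \<mu> (d0 s + \<mu> s)"
    using mu_add[OF d0_L[OF s] mu_s] by (simp add: algebra_simps)
  then have h_d0_mu_s: "h (d0 (\<mu> s)) = - hmu (d0 s + \<mu> s)"
    using additive_diff[OF h_add U_L[OF s] mu_L[OF ds]] h_U[OF s] hs additive_zero[OF U_add]
    by (simp add: hmu_def)
  define H where "H = hmu (d0 s + \<mu> s)"
  have "d0 (h (\<mu> s)) = \<mu> s - \<iota> (p (\<mu> c)) + H"
    using homotopy[OF mu_s] p_mu_s h_d0_mu_s by (simp add: H_def algebra_simps)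
  then have "d0 s = d0 c - (\<mu> s - \<iota> (p (\<mu> c)) + H)"
    using d0_s by simp
  then have "(d0 s + \<mu> s) + H = d0 c + \<iota> (p (\<mu> c))"
    by (simp add: algebra_simps)
  moreover have "d0 c + \<iota> (p (\<mu> c)) \<in> L"
    using c by (simp add: L_add d0_L iota_L)
  ultimately show ?thesis
    using one_plus_hmu_inj[OF ds neumann_L] neumann_right_inverse s_def H_def by metis
qed

lemma neumann_chain_map:
  "d0 (neumann (\<iota> u)) + \<mu> (neumann (\<iota> u)) = neumann (\<iota> (p (\<mu> (\<iota> u))))"
  using neumann_differential[OF iota_L h_iota] by (simp add: d0_iota)

lemma neumann_homotopy:
  assumes x: "x \<in> L"
  shows "(d0 (neumann (h x)) + \<mu> (neumann (h x))) + neumann (h (d0 x + \<mu> x))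
    = x - neumann (\<iota> (p x))"
proof -
  have hx: "h x \<in> L" and d0x: "d0 x \<in> L" and mux: "\<mu> x \<in> L" and px: "\<iota> (p x) \<in> L"
    using x by (simp_all add: h_L d0_L mu_L iota_L)
  have homotopy_x: "d0 (h x) + (h (d0 x) + hmu x) = (x + hmu x) - \<iota> (p x)"
    using homotopy[OF x] by (simp add: add.assoc[symmetric])
  have "(d0 (neumann (h x)) + \<mu> (neumann (h x))) + neumann (h (d0 x + \<mu> x))
      = neumann (d0 (h x)) + neumann (h (d0 x) + hmu x)"
    using neumann_differential[OF hx h_h[OF x]] p_mu_h[OF x] h_add[OF d0x mux]
    by (simp add: iota_zero hmu_def)
  also have "\<dots> = neumann ((x + hmu x) - \<iota> (p x))"
    using neumann_add[OF d0_L[OF hx] L_add[OF h_L[OF d0x] hmu_L[OF x]]] homotopy_x by simp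
  also have "\<dots> = x - neumann (\<iota> (p x))"
    by (simp only: additive_diff[OF neumann_add L_add[OF x hmu_L[OF x]] px]
        neumann_left_inverse[OF x])
  finally show ?thesis .
qed

lemma p_neumann:
  assumes c: "c \<in> L"
  shows "p (neumann c) = p c"
proof -
  have "neumann c = c - hmu (neumann c)"
    using neumann_right_inverse[OF c] by (simp add: eq_diff_eq)
  then show ?thesis
    using additive_diff[OF p_add c hmu_L[OF neumann_L[OF c]]] p_h[OF mu_L[OF neumann_L[OF c]]]
    by (metis diff_zero hmu_def)
qed

lemma neumann_commute:
  assumes f_L: "\<And>x. x \<in> L \<Longrightarrow> f x \<in> L"
    and f_add: "\<And>x y. x \<in> L \<Longrightarrow> y \<in> L \<Longrightarrow> f (x + y) = f x + f y"
    and f_hmu: "\<And>x. x \<in> L \<Longrightarrow> hmu (f x) = f (hmu x)" and x: "x \<in> L"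
  shows "neumann (f x) = f (neumann x)"
proof -
  have f_hmu_pow: "(hmu ^^ m) (f x) = f ((hmu ^^ m) x)" for m
    by (induction m) (simp_all add: f_hmu hmu_pow_L x)
  have "f (neumann x) = (\<Sum>m\<le>n. f (minus_one_pow m ((hmu ^^ m) x)))"
    unfolding neumann_def by (rule additive_sum[OF f_add]) (auto intro: minus_one_pow_L hmu_pow_L x)
  also have "\<dots> = neumann (f x)"
    by (simp add: neumann_def f_hmu_pow additive_minus_one_pow[OF f_add hmu_pow_L[OF x]])
  finally show ?thesis ..
qed

lemma neumann_preserves:
  assumes P_zero: "P 0" and P_add: "\<And>x y. P x \<Longrightarrow> P y \<Longrightarrow> P (x + y)"
    and P_uminus: "\<And>x. P x \<Longrightarrow> P (- x)"
    and P_hmu: "\<And>x. x \<in> L \<Longrightarrow> P x \<Longrightarrow> P (hmu x)" and x: "x \<in> L" and Px: "P x"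
  shows "P (neumann x)"
proof -
  have "P ((hmu ^^ m) x)" for m
    by (induction m) (simp_all add: Px P_hmu hmu_pow_L x)
  then have P_term: "P (minus_one_pow m ((hmu ^^ m) x))" for m
    using P_uminus by (simp add: minus_one_pow_def)
  have "P (\<Sum>m\<in>K. minus_one_pow m ((hmu ^^ m) x))" if "finite K" for K
    using that by (induction K rule: finite_induct) (simp_all add: P_zero P_add P_term)
  then show ?thesis
    by (simp add: neumann_def)
qed

end

section \<open>The ideal \<open>(b)\<close> and exterior signs\<close>

lemma seq_ideal_zero: "0 \<in> seq_ideal b k"
  unfolding seq_ideal_def by (auto intro: exI[where x="\<lambda>_. 0"])

lemma seq_ideal_add:
  assumes "x \<in> seq_ideal b k" "y \<in> seq_ideal b k"
  shows "x + y \<in> seq_ideal b k"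
proof -
  obtain c c' where "x = (\<Sum>i<k. c i * b i)" "y = (\<Sum>i<k. c' i * b i)"
    using assms unfolding seq_ideal_def by auto
  then have "x + y = (\<Sum>i<k. (c i + c' i) * b i)"
    by (simp add: sum.distrib distrib_right)
  then show ?thesis
    unfolding seq_ideal_def by (auto intro: exI[where x="\<lambda>i. c i + c' i"])
qed

lemma seq_ideal_mult:
  assumes "x \<in> seq_ideal b k"
  shows "r * x \<in> seq_ideal b k"
proof -
  obtain c where "x = (\<Sum>i<k. c i * b i)"
    using assms unfolding seq_ideal_def by auto
  then have "r * x = (\<Sum>i<k. (r * c i) * b i)"
    by (simp add: sum_distrib_left mult.assoc)
  then show ?thesis
    unfolding seq_ideal_def by (auto intro: exI[where x="\<lambda>i. r * c i"])
qed

lemma seq_ideal_uminus: "x \<in> seq_ideal b k \<Longrightarrow> - x \<in> seq_ideal b k"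
  using seq_ideal_mult[of x b k "-1"] by simp

lemma seq_ideal_sum:
  "finite K \<Longrightarrow> (\<And>i. i \<in> K \<Longrightarrow> f i \<in> seq_ideal b k) \<Longrightarrow> sum f K \<in> seq_ideal b k"
  by (induction K rule: finite_induct) (auto simp: seq_ideal_zero seq_ideal_add)

lemma seq_ideal_generator:
  assumes "i < k"
  shows "b i \<in> seq_ideal b k"
proof -
  have "b i = (\<Sum>j<k. (if j = i then 1 else 0) * b j)"
    using assms by (simp add: if_distrib[of "\<lambda>x. x * _"] cong: if_cong)
  then show ?thesis
    unfolding seq_ideal_def by (auto intro: exI[where x="\<lambda>j. if j = i then 1 else 0"])
qed

lemma seq_ideal_combination:
  assumes "finite K" "K \<subseteq> {..<k}"
  shows "(\<Sum>i\<in>K. b i * c i) \<in> seq_ideal b k"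
  using assms
  by (intro seq_ideal_sum) (auto simp: mult.commute[of "b _"] intro!: seq_ideal_mult seq_ideal_generator)

lemma ext_sign_insert:
  assumes "k \<notin> Y"
  shows "(ext_sign i (insert k Y) :: 'r::comm_ring_1) = (if k < i then - 1 else 1) * ext_sign i Y"
proof -
  have fin: "finite {j\<in>Y. j < i}"
    by (rule finite_subset[of _ "{..<i}"]) auto
  show ?thesis
  proof (cases "k < i")
    case True
    then have "{j\<in>insert k Y. j < i} = insert k {j\<in>Y. j < i}" by auto
    then show ?thesis using True assms fin by (simp add: ext_sign_def)
  next
    case False
    then have "{j\<in>insert k Y. j < i} = {j\<in>Y. j < i}" by auto
    then show ?thesis using False by (simp add: ext_sign_def)
  qed
qed

lemma ext_sign_square: "(ext_sign i Y :: 'r::comm_ring_1) * ext_sign i Y = 1"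
  unfolding ext_sign_def by (metis power_mult_distrib mult_minus1 minus_minus power_one)

text \<open>The sign rule \<open>\<theta>\<^sub>k \<and> \<theta>\<^sub>i = - \<theta>\<^sub>i \<and> \<theta>\<^sub>k\<close>, read off from the coefficients.\<close>
lemma ext_sign_swap:
  assumes "i \<noteq> k" "i \<notin> Y" "k \<notin> Y"
  shows "(ext_sign k (insert i Y) * ext_sign i Y :: 'r::comm_ring_1)
    = - (ext_sign i (insert k Y) * ext_sign k Y)"
  using assms by (cases "i < k") (auto simp: ext_sign_insert)

lemma ksign_square: "(ksign par e :: 'r::comm_ring_1) * ksign par e = 1"
  by (simp add: ksign_def)

lemma sum_antisymmetric:
  fixes F :: "nat \<Rightarrow> nat \<Rightarrow> 'r::ab_group_add"
  assumes fin: "finite C" and anti: "\<And>i k. i \<in> C \<Longrightarrow> k \<in> C \<Longrightarrow> i \<noteq> k \<Longrightarrow> F k i = - F i k"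
  shows "(\<Sum>i\<in>C. \<Sum>k\<in>C - {i}. F i k) = 0"
proof -
  have split: "(\<Sum>k\<in>C - {i}. F i k) = (\<Sum>k\<in>{k\<in>C. i < k}. F i k) + (\<Sum>k\<in>{k\<in>C. k < i}. F i k)" for i
  proof -
    have "C - {i} = {k\<in>C. i < k} \<union> {k\<in>C. k < i}" "{k\<in>C. i < k} \<inter> {k\<in>C. k < i} = {}"
      by auto
    then show ?thesis using fin by (simp add: sum.union_disjoint)
  qed
  have "(\<Sum>i\<in>C. \<Sum>k\<in>{k\<in>C. k < i}. F i k) = (\<Sum>k\<in>C. \<Sum>i\<in>{i\<in>C. k < i}. F i k)"
    by (rule sum.swap_restrict[OF fin fin])
  also have "\<dots> = (\<Sum>k\<in>C. \<Sum>i\<in>{i\<in>C. k < i}. - F k i)"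
    using anti by (intro sum.cong refl) (metis (mono_tags, lifting) mem_Collect_eq nat_neq_iff)
  also have "\<dots> = - (\<Sum>i\<in>C. \<Sum>k\<in>{k\<in>C. i < k}. F i k)"
    by (simp add: sum_negf)
  finally show ?thesis
    by (simp add: split sum.distrib)
qed

section \<open>The Koszul differentials\<close>

lemma delta_plus_add: "delta_plus n b (\<omega> + \<omega>') = delta_plus n b \<omega> + delta_plus n b \<omega>'"
  by (rule ext) (simp add: delta_plus_def sum.distrib algebra_simps)

lemma delta_minus_add: "delta_minus n a (\<omega> + \<omega>') = delta_minus n a \<omega> + delta_minus n a \<omega>'"
  by (rule ext) (simp add: delta_minus_def sum.distrib algebra_simps)

lemma delta_plus_scale: "delta_plus n b (\<lambda>I. c * \<omega> I) = (\<lambda>J. c * delta_plus n b \<omega> J)"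
  by (rule ext) (simp add: delta_plus_def sum_distrib_left algebra_simps)

lemma delta_minus_scale: "delta_minus n a (\<lambda>I. c * \<omega> I) = (\<lambda>J. c * delta_minus n a \<omega> J)"
  by (rule ext) (simp add: delta_minus_def sum_distrib_left algebra_simps)

lemma delta_plus_sum:
  "delta_plus n b (\<lambda>I. \<Sum>f\<in>F. g f I) = (\<lambda>J. \<Sum>f\<in>F. delta_plus n b (g f) J)"
  by (rule ext) (simp add: delta_plus_def sum_distrib_left algebra_simps sum.swap[of _ F])

lemma delta_minus_sum:
  "delta_minus n a (\<lambda>I. \<Sum>f\<in>F. g f I) = (\<lambda>J. \<Sum>f\<in>F. delta_minus n a (g f) J)"
  by (rule ext) (simp add: delta_minus_def sum_distrib_left algebra_simps sum.swap[of _ F])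

lemma delta_plus_carrier: "delta_plus n b \<omega> \<in> ext_carrier n"
  by (simp add: delta_plus_def ext_carrier_def)

lemma delta_minus_carrier: "delta_minus n a \<omega> \<in> ext_carrier n"
  by (simp add: delta_minus_def ext_carrier_def)

lemma delta_plus_square: "delta_plus n b (delta_plus n b \<omega>) = 0"
proof
  fix J :: "nat set"
  show "delta_plus n b (delta_plus n b \<omega>) J = 0 J"
  proof (cases "J \<subseteq> {..<n}")
    case False
    then show ?thesis by (simp add: delta_plus_def)
  next
    case True
    define C where "C = {..<n} - J"
    define F where "F i k = b i * ext_sign i J * (b k * ext_sign k (insert i J) * \<omega> (insert k (insert i J)))"
      for i k
    have "delta_plus n b (delta_plus n b \<omega>) J = (\<Sum>i\<in>C. b i * ext_sign i J * delta_plus n b \<omega> (insert i J))"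
      using True by (simp add: delta_plus_def[of n b "delta_plus n b \<omega>"] C_def)
    also have "\<dots> = (\<Sum>i\<in>C. \<Sum>k\<in>C - {i}. F i k)"
    proof (rule sum.cong[OF refl])
      fix i assume "i \<in> C"
      then have "insert i J \<subseteq> {..<n}" "{..<n} - insert i J = C - {i}"
        using True by (auto simp: C_def)
      then show "b i * ext_sign i J * delta_plus n b \<omega> (insert i J) = (\<Sum>k\<in>C - {i}. F i k)"
        by (simp add: delta_plus_def F_def sum_distrib_left)
    qed
    also have "\<dots> = 0"
    proof (rule sum_antisymmetric)
      fix i k assume "i \<in> C" "k \<in> C" "i \<noteq> k"
      then have ikJ: "i \<noteq> k" "i \<notin> J" "k \<notin> J"
        by (auto simp: C_def)
      define X where "X = b i * b k * \<omega> (insert k (insert i J))"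
      have "F k i = X * (ext_sign i (insert k J) * ext_sign k J)"
        "F i k = X * (ext_sign k (insert i J) * ext_sign i J)"
        by (simp_all add: F_def X_def insert_commute mult_ac)
      then show "F k i = - F i k"
        by (simp add: ext_sign_swap[OF ikJ])
    qed (simp add: C_def)
    finally show ?thesis by simp
  qed
qed

lemma delta_minus_square: "delta_minus n a (delta_minus n a \<omega>) = 0"
proof
  fix J :: "nat set"
  show "delta_minus n a (delta_minus n a \<omega>) J = 0 J"
  proof (cases "J \<subseteq> {..<n}")
    case False
    then show ?thesis by (simp add: delta_minus_def)
  next
    case True
    then have finJ: "finite J"
      using finite_subset by blast
    define F where "F i k = a i * ext_sign i (J - {i}) * (a k * ext_sign k (J - {i} - {k}) * \<omega> (J - {i} - {k}))"
      for i k
    have "delta_minus n a (delta_minus n a \<omega>) J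
        = (\<Sum>i\<in>J. a i * ext_sign i (J - {i}) * delta_minus n a \<omega> (J - {i}))"
      using True by (simp add: delta_minus_def[of n a "delta_minus n a \<omega>"])
    also have "\<dots> = (\<Sum>i\<in>J. \<Sum>k\<in>J - {i}. F i k)"
    proof (rule sum.cong[OF refl])
      fix i assume "i \<in> J"
      then have "J - {i} \<subseteq> {..<n}"
        using True by auto
      then show "a i * ext_sign i (J - {i}) * delta_minus n a \<omega> (J - {i}) = (\<Sum>k\<in>J - {i}. F i k)"
        by (simp add: delta_minus_def F_def sum_distrib_left)
    qed
    also have "\<dots> = 0"
    proof (rule sum_antisymmetric[OF finJ])
      fix i k assume ik: "i \<in> J" "k \<in> J" "i \<noteq> k"
      define Y where "Y = J - {i} - {k}"
      have Y: "J - {i} = insert k Y" "J - {k} = insert i Y" "J - {k} - {i} = Y" "J - {i} - {k} = Y"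
        "i \<notin> Y" "k \<notin> Y" "Y - {i} = Y" "Y - {k} = Y"
        using ik by (auto simp: Y_def)
      have "F k i = a i * a k * \<omega> Y * (ext_sign k (insert i Y) * ext_sign i Y)"
        "F i k = a i * a k * \<omega> Y * (ext_sign i (insert k Y) * ext_sign k Y)"
        unfolding F_def by (simp_all add: Y Diff_insert_absorb mult_ac)
      then show "F k i = - F i k"
        by (simp add: ext_sign_swap[OF ik(3) Y(5,6)])
    qed
    finally show ?thesis by simp
  qed
qed

lemma delta_minus_insert:
  assumes "insert i J \<subseteq> {..<n}" "i \<notin> J"
  shows "delta_minus n a \<omega> (insert i J) = a i * ext_sign i J * \<omega> J
    + (\<Sum>k\<in>J. a k * ext_sign k (insert i (J - {k})) * \<omega> (insert i (J - {k})))"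
proof -
  have "finite J"
    using assms(1) finite_subset by auto
  moreover have "insert i J - {k} = insert i (J - {k})" if "k \<in> J" for k
    using that assms(2) by auto
  ultimately show ?thesis
    using assms by (simp add: delta_minus_def cong: sum.cong)
qed

lemma delta_plus_remove:
  assumes "J \<subseteq> {..<n}" "k \<in> J"
  shows "delta_plus n b \<omega> (J - {k}) = b k * ext_sign k (J - {k}) * \<omega> J
    + (\<Sum>i\<in>{..<n} - J. b i * ext_sign i (J - {k}) * \<omega> (insert i (J - {k})))"
proof -
  have "{..<n} - (J - {k}) = insert k ({..<n} - J)" "k \<notin> {..<n} - J" "insert k (J - {k}) = J"
    "J - {k} \<subseteq> {..<n}"
    using assms by auto
  then show ?thesis
    using assms by (simp add: delta_plus_def)
qed

lemma delta_plus_delta_minus: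
  assumes \<omega>: "\<omega> \<in> ext_carrier n"
  shows "delta_plus n b (delta_minus n a \<omega>) J + delta_minus n a (delta_plus n b \<omega>) J
    = (\<Sum>i<n. a i * b i) * \<omega> J"
proof (cases "J \<subseteq> {..<n}")
  case False
  then show ?thesis
    using \<omega> by (simp add: delta_plus_def delta_minus_def ext_carrier_def)
next
  case True
  have finJ: "finite J"
    using True finite_subset by blast
  define C where "C = {..<n} - J"
  have finC: "finite C" and C_J: "{..<n} = C \<union> J" "C \<inter> J = {}"
    using True by (auto simp: C_def)
  define G where "G i k = a k * b i * \<omega> (insert i (J - {k}))" for i k
  define c1 where "c1 i k = (ext_sign i J * ext_sign k (insert i (J - {k})) :: 'a)" for i k
  define c2 where "c2 i k = (ext_sign k (J - {k}) * ext_sign i (J - {k}) :: 'a)" for i k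
  have "delta_plus n b (delta_minus n a \<omega>) J
      = (\<Sum>i\<in>C. b i * ext_sign i J * delta_minus n a \<omega> (insert i J))"
    using True by (simp add: delta_plus_def C_def)
  also have "\<dots> = (\<Sum>i\<in>C. a i * b i * \<omega> J + (\<Sum>k\<in>J. c1 i k * G i k))"
  proof (rule sum.cong[OF refl])
    fix i assume "i \<in> C"
    then have "insert i J \<subseteq> {..<n}" "i \<notin> J"
      using True by (auto simp: C_def)
    then show "b i * ext_sign i J * delta_minus n a \<omega> (insert i J) = a i * b i * \<omega> J + (\<Sum>k\<in>J. c1 i k * G i k)"
      by (simp add: delta_minus_insert c1_def G_def sum_distrib_left algebra_simps ext_sign_square)
  qed
  finally have plus_minus: "delta_plus n b (delta_minus n a \<omega>) J
      = (\<Sum>i\<in>C. a i * b i * \<omega> J) + (\<Sum>i\<in>C. \<Sum>k\<in>J. c1 i k * G i k)"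
    by (simp add: sum.distrib)
  have "delta_minus n a (delta_plus n b \<omega>) J
      = (\<Sum>k\<in>J. a k * ext_sign k (J - {k}) * delta_plus n b \<omega> (J - {k}))"
    using True by (simp add: delta_minus_def)
  also have "\<dots> = (\<Sum>k\<in>J. a k * b k * \<omega> J + (\<Sum>i\<in>C. c2 i k * G i k))"
  proof (rule sum.cong[OF refl])
    fix k assume "k \<in> J"
    then show "a k * ext_sign k (J - {k}) * delta_plus n b \<omega> (J - {k}) = a k * b k * \<omega> J + (\<Sum>i\<in>C. c2 i k * G i k)"
      using True by (simp add: delta_plus_remove C_def c2_def G_def sum_distrib_left algebra_simps ext_sign_square)
  qed
  finally have minus_plus: "delta_minus n a (delta_plus n b \<omega>) J
      = (\<Sum>k\<in>J. a k * b k * \<omega> J) + (\<Sum>i\<in>C. \<Sum>k\<in>J. c2 i k * G i k)"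
    by (simp add: sum.distrib sum.swap[of _ J])
  have cross: "c1 i k + c2 i k = 0" if "i \<in> C" "k \<in> J" for i k
  proof -
    define Y where "Y = J - {k}"
    have Y: "i \<noteq> k" "i \<notin> Y" "k \<notin> Y" and J: "J = insert k Y"
      using that by (auto simp: C_def Y_def)
    show ?thesis
      unfolding c1_def c2_def Y_def[symmetric] unfolding J
      using Y by (cases "i < k") (simp_all add: ext_sign_insert)
  qed
  have "(\<Sum>i\<in>C. \<Sum>k\<in>J. c1 i k * G i k) + (\<Sum>i\<in>C. \<Sum>k\<in>J. c2 i k * G i k)
      = (\<Sum>i\<in>C. \<Sum>k\<in>J. (c1 i k + c2 i k) * G i k)"
    by (simp add: sum.distrib distrib_right)
  also have "\<dots> = 0"
    using cross by (intro sum.neutral ballI) simp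
  finally have cancel: "(\<Sum>i\<in>C. \<Sum>k\<in>J. c1 i k * G i k) + (\<Sum>i\<in>C. \<Sum>k\<in>J. c2 i k * G i k) = 0" .
  have diag: "(\<Sum>i<n. a i * b i) * \<omega> J = (\<Sum>i\<in>C. a i * b i * \<omega> J) + (\<Sum>k\<in>J. a k * b k * \<omega> J)"
    using finC finJ C_J by (simp add: sum.union_disjoint distrib_right sum_distrib_right)
  show ?thesis
    unfolding plus_minus minus_plus diag
    using cancel by (simp add: ac_simps)
qed

section \<open>Tensor products with \<open>X\<close>\<close>

lemma ext_carrier_zero: "(0 :: nat set \<Rightarrow> 'r::comm_ring_1) \<in> ext_carrier n"
  by (simp add: ext_carrier_def)

lemma ext_carrier_uminus: "(\<omega> :: nat set \<Rightarrow> 'r::comm_ring_1) \<in> ext_carrier n \<Longrightarrow> - \<omega> \<in> ext_carrier n"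
  by (simp add: ext_carrier_def)

lemma ext_carrier_scale: "(\<omega> :: nat set \<Rightarrow> 'r::comm_ring_1) \<in> ext_carrier n \<Longrightarrow> (\<lambda>I. c * \<omega> I) \<in> ext_carrier n"
  by (simp add: ext_carrier_def)

lemma sum_apply: "sum f K x = (\<Sum>j\<in>K. f j x)"
  by (induction K rule: infinite_finite_induct) auto

lemma ext_carrier_sum:
  "(\<And>j. j \<in> K \<Longrightarrow> f j \<in> ext_carrier n) \<Longrightarrow> (sum f K :: nat set \<Rightarrow> 'r::comm_ring_1) \<in> ext_carrier n"
  by (simp add: ext_carrier_def sum_apply)

lemma L_carrierD: "z \<in> L_carrier B n \<Longrightarrow> e \<notin> B \<Longrightarrow> z e = 0"
  by (auto simp: L_carrier_def)

lemma L_carrier_component: "z \<in> L_carrier B n \<Longrightarrow> z e \<in> ext_carrier n"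
  by (auto simp: L_carrier_def ext_carrier_def)

lemma L_carrierI: "(\<And>e. e \<notin> B \<Longrightarrow> z e = 0) \<Longrightarrow> (\<And>e. z e \<in> ext_carrier n) \<Longrightarrow> z \<in> L_carrier B n"
  by (auto simp: L_carrier_def ext_carrier_def fun_eq_iff)

lemma L_carrier_zero: "(0 :: 'x \<Rightarrow> nat set \<Rightarrow> 'r::comm_ring_1) \<in> L_carrier B n"
  by (simp add: L_carrier_def)

lemma L_carrier_add:
  "(z :: 'x \<Rightarrow> nat set \<Rightarrow> 'r::comm_ring_1) \<in> L_carrier B n \<Longrightarrow> w \<in> L_carrier B n \<Longrightarrow> z + w \<in> L_carrier B n"
  by (simp add: L_carrier_def)

lemma L_carrier_uminus: "(z :: 'x \<Rightarrow> nat set \<Rightarrow> 'r::comm_ring_1) \<in> L_carrier B n \<Longrightarrow> - z \<in> L_carrier B n"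
  by (simp add: L_carrier_def)

lemma L_carrier_scale:
  "(z :: 'x \<Rightarrow> nat set \<Rightarrow> 'r::comm_ring_1) \<in> L_carrier B n \<Longrightarrow> (\<lambda>e I. c * z e I) \<in> L_carrier B n"
  by (simp add: L_carrier_def)

lemma M_eq_refl: "M_eq (seq_ideal b n) B y y"
  by (simp add: M_eq_def seq_ideal_zero)

lemma odd_ext_apply: "e \<in> B \<Longrightarrow> odd_ext B par f z e = (\<lambda>I. ksign par e * f (z e) I)"
  by (simp add: odd_ext_def)

lemma odd_ext_outside: "e \<notin> B \<Longrightarrow> odd_ext B par f z e = 0"
  by (simp add: odd_ext_def fun_eq_iff)

lemma odd_ext_L_carrier:
  assumes "\<And>\<omega>. \<omega> \<in> ext_carrier n \<Longrightarrow> f \<omega> \<in> ext_carrier n" and "z \<in> L_carrier B n"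
  shows "odd_ext B par f z \<in> L_carrier B n"
proof (rule L_carrierI)
  show "odd_ext B par f z e \<in> ext_carrier n" for e
    using assms(1)[OF L_carrier_component[OF assms(2)]]
    by (cases "e \<in> B") (simp_all add: odd_ext_apply odd_ext_outside ext_carrier_zero ext_carrier_scale)
qed (simp add: odd_ext_outside)

lemma odd_ext_add:
  assumes "\<And>\<omega> \<omega>'. \<omega> \<in> ext_carrier n \<Longrightarrow> \<omega>' \<in> ext_carrier n \<Longrightarrow> f (\<omega> + \<omega>') = f \<omega> + f \<omega>'"
    and "z \<in> L_carrier B n" "w \<in> L_carrier B n"
  shows "odd_ext B par f (z + w) = odd_ext B par f z + odd_ext B par f w"
  using assms by (intro ext) (simp add: odd_ext_def L_carrier_component algebra_simps)

text \<open>The Koszul signs of two odd maps cancel.\<close>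
lemma odd_ext_odd_ext:
  assumes "\<And>e. e \<in> B \<Longrightarrow> f (\<lambda>I. ksign par e * g (z e) I) = (\<lambda>J. ksign par e * f (g (z e)) J)"
  shows "odd_ext B par f (odd_ext B par g z) = (\<lambda>e I. if e \<in> B then f (g (z e)) I else (0 :: 'r::comm_ring_1))"
proof (intro ext)
  fix e and I :: "nat set"
  show "odd_ext B par f (odd_ext B par g z) e I = (if e \<in> B then f (g (z e)) I else 0)"
  proof (cases "e \<in> B")
    case True
    then have "odd_ext B par f (odd_ext B par g z) e I = (ksign par e * ksign par e) * f (g (z e)) I"
      using assms[OF True] by (simp add: odd_ext_apply)
    then show ?thesis
      using True by (simp add: ksign_square)
  qed (simp add: odd_ext_def)
qed

lemma odd_ext_delta_plus_carrier: "z \<in> L_carrier B n \<Longrightarrow> odd_ext B par (delta_plus n b) z \<in> L_carrier B n"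
  by (intro odd_ext_L_carrier delta_plus_carrier)

lemma odd_ext_delta_plus_add:
  "z \<in> L_carrier B n \<Longrightarrow> w \<in> L_carrier B n \<Longrightarrow>
   odd_ext B par (delta_plus n b) (z + w) = odd_ext B par (delta_plus n b) z + odd_ext B par (delta_plus n b) w"
  by (rule odd_ext_add[OF delta_plus_add])

lemma odd_ext_delta_plus_square:
  "odd_ext B par (delta_plus n b) (odd_ext B par (delta_plus n b) z) = (0 :: 'x \<Rightarrow> nat set \<Rightarrow> 'r::comm_ring_1)"
  by (subst odd_ext_odd_ext) (auto simp: delta_plus_scale delta_plus_square fun_eq_iff)

lemma dX_L_carrier: "z \<in> L_carrier B n \<Longrightarrow> dX_L B D z \<in> L_carrier B n"
  by (simp add: L_carrier_def dX_L_def)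

lemma dX_L_add: "dX_L B D (z + w) = dX_L B D z + dX_L B D w"
  by (intro ext) (simp add: dX_L_def sum.distrib algebra_simps)

lemma dX_M_carrier: "dX_M B D y \<in> M_carrier B"
  by (simp add: M_carrier_def dX_M_def)

lemma dX_M_add: "dX_M B D (y + y') = dX_M B D y + dX_M B D y'"
  by (intro ext) (simp add: dX_M_def sum.distrib algebra_simps)

lemma dX_M_scale: "dX_M B D (\<lambda>e. c * y e) = (\<lambda>e. c * dX_M B D y e)"
  by (intro ext) (simp add: dX_M_def sum_distrib_left algebra_simps)

lemma mu_map_carrier: "z \<in> L_carrier B n \<Longrightarrow> mu_map B par D n a z \<in> L_carrier B n"
  unfolding mu_map_def by (intro L_carrier_add dX_L_carrier odd_ext_L_carrier delta_minus_carrier)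

lemma mu_map_add:
  assumes "z \<in> L_carrier B n" "w \<in> L_carrier B n"
  shows "mu_map B par D n a (z + w) = mu_map B par D n a z + mu_map B par D n a w"
proof -
  have "odd_ext B par (delta_minus n a) (z + w)
      = odd_ext B par (delta_minus n a) z + odd_ext B par (delta_minus n a) w"
    by (rule odd_ext_add[OF delta_minus_add assms])
  then show ?thesis
    by (simp add: mu_map_def dX_L_add add_ac)
qed

lemma mu_map_scale: "mu_map B par D n a (\<lambda>e I. c * z e I) = (\<lambda>e I. c * mu_map B par D n a z e I)"
  by (intro ext) (simp add: mu_map_def odd_ext_def dX_L_def delta_minus_scale sum_distrib_left algebra_simps)

lemma d_L_carrier: "z \<in> L_carrier B n \<Longrightarrow> d_L B par D n a b z \<in> L_carrier B n"
  unfolding d_L_def by (intro L_carrier_add odd_ext_delta_plus_carrier mu_map_carrier)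

lemma d_L_add:
  "z \<in> L_carrier B n \<Longrightarrow> w \<in> L_carrier B n \<Longrightarrow> d_L B par D n a b (z + w) = d_L B par D n a b z + d_L B par D n a b w"
  by (simp add: d_L_def odd_ext_delta_plus_add mu_map_add add_ac)

lemma d_L_scale: "d_L B par D n a b (\<lambda>e I. c * z e I) = (\<lambda>e I. c * d_L B par D n a b z e I)"
  by (intro ext)
    (simp add: d_L_def mu_map_def odd_ext_def dX_L_def delta_plus_scale delta_minus_scale sum_distrib_left algebra_simps)

lemma d_L_apply: "e \<in> B \<Longrightarrow> d_L B par D n a b z e =
   (\<lambda>I. ksign par e * (delta_plus n b (z e) I + delta_minus n a (z e) I) + (\<Sum>g\<in>B. D e g * z g I))"
  by (simp add: d_L_def mu_map_def odd_ext_def dX_L_def fun_eq_iff algebra_simps)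

lemma d_L_outside: "e \<notin> B \<Longrightarrow> d_L B par D n a b z e = 0"
  by (simp add: d_L_def mu_map_def odd_ext_def dX_L_def fun_eq_iff)

lemma linear_op_combination:
  fixes op :: "(nat set \<Rightarrow> 'r::comm_ring_1) \<Rightarrow> nat set \<Rightarrow> 'r"
  assumes add: "\<And>\<omega> \<omega>'. op (\<omega> + \<omega>') = op \<omega> + op \<omega>'"
    and scale: "\<And>c \<omega>. op (\<lambda>I. c * \<omega> I) = (\<lambda>J. c * op \<omega> J)"
    and sum: "\<And>g. op (\<lambda>I. \<Sum>f\<in>B. g f I) = (\<lambda>J. \<Sum>f\<in>B. op (g f) J)"
  shows "op (\<lambda>I. c * (\<alpha> I + \<beta> I) + (\<Sum>g\<in>B. d g * \<gamma> g I)) J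
    = c * (op \<alpha> J + op \<beta> J) + (\<Sum>g\<in>B. d g * op (\<gamma> g) J)"
proof -
  have split: "(\<lambda>I. c * (\<alpha> I + \<beta> I) + (\<Sum>g\<in>B. d g * \<gamma> g I))
      = (\<lambda>I. c * (\<alpha> + \<beta>) I) + (\<lambda>I. \<Sum>g\<in>B. (\<lambda>I. d g * \<gamma> g I) I)"
    by (simp add: fun_eq_iff)
  show ?thesis
    unfolding split add scale sum by (simp add: add scale)
qed

text \<open>Expanding \<open>d\<^sub>L\<^sup>2\<close>: the Koszul part contributes \<open>W\<close>, the matrix part \<open>V\<close>, and the
  mixed terms cancel because \<open>D\<close> only connects basis vectors of opposite parity, whose Koszul
  signs differ.\<close>
lemma d_L_square:
  assumes MF: "matrix_factorisation B par D V" and z: "z \<in> L_carrier B n"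
  shows "d_L B par D n a b (d_L B par D n a b z) = (\<lambda>e I. (V + (\<Sum>i<n. a i * b i)) * z e I)"
proof (intro ext)
  fix e and I :: "nat set"
  let ?P = "delta_plus n b" and ?M = "delta_minus n a" and ?W = "\<Sum>i<n. a i * b i"
  define w where "w = d_L B par D n a b z"
  define X where "X g = ?P (z g) I + ?M (z g) I" for g
  have fin: "finite B"
    using MF by (simp add: matrix_factorisation_def)
  show "d_L B par D n a b w e I = (V + ?W) * z e I"
  proof (cases "e \<in> B")
    case False
    then show ?thesis using z by (simp add: d_L_outside L_carrierD)
  next
    case e: True
    have we: "w e = (\<lambda>I. ksign par e * (?P (z e) I + ?M (z e) I) + (\<Sum>g\<in>B. D e g * z g I))"
      using e by (simp add: w_def d_L_apply)
    have P_we: "?P (w e) I = ksign par e * (?P (?P (z e)) I + ?P (?M (z e)) I) + (\<Sum>g\<in>B. D e g * ?P (z g) I)"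
      unfolding we by (rule linear_op_combination[OF delta_plus_add delta_plus_scale delta_plus_sum])
    have M_we: "?M (w e) I = ksign par e * (?M (?P (z e)) I + ?M (?M (z e)) I) + (\<Sum>g\<in>B. D e g * ?M (z g) I)"
      unfolding we by (rule linear_op_combination[OF delta_minus_add delta_minus_scale delta_minus_sum])
    have koszul: "ksign par e * (?P (w e) I + ?M (w e) I) = ?W * z e I + (\<Sum>g\<in>B. ksign par e * D e g * X g)"
    proof -
      have "?P (?P (z e)) I + ?P (?M (z e)) I + (?M (?P (z e)) I + ?M (?M (z e)) I) = ?W * z e I"
        using delta_plus_delta_minus[OF L_carrier_component[OF z], where a=a and b=b and J=I]
        by (simp add: delta_plus_square delta_minus_square)
      moreover have "ksign par e * (?P (w e) I + ?M (w e) I) =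
          (ksign par e * ksign par e) * (?P (?P (z e)) I + ?P (?M (z e)) I + (?M (?P (z e)) I + ?M (?M (z e)) I))
          + (\<Sum>g\<in>B. ksign par e * D e g * X g)"
        unfolding X_def P_we M_we by (simp add: algebra_simps sum.distrib sum_distrib_left)
      ultimately show ?thesis
        by (simp add: ksign_square)
    qed
    have matrix: "(\<Sum>f\<in>B. D e f * w f I)
        = (\<Sum>f\<in>B. ksign par f * D e f * X f) + (\<Sum>f\<in>B. \<Sum>g\<in>B. D e f * D f g * z g I)"
      by (simp add: w_def d_L_apply X_def algebra_simps sum_distrib_left sum.distrib)
    have cross: "(\<Sum>g\<in>B. ksign par e * D e g * X g) + (\<Sum>f\<in>B. ksign par f * D e f * X f) = 0"
    proof -
      have "(ksign par e + ksign par g) * D e g = 0" if "g \<in> B" for g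
        using MF that e by (cases "par e = par g") (auto simp: ksign_def matrix_factorisation_def)
      then have "(\<Sum>g\<in>B. (ksign par e + ksign par g) * D e g * X g) = 0"
        by simp
      then show ?thesis
        by (simp add: sum.distrib algebra_simps)
    qed
    have "(\<Sum>f\<in>B. \<Sum>g\<in>B. D e f * D f g * z g I) = (\<Sum>g\<in>B. (\<Sum>f\<in>B. D e f * D f g) * z g I)"
      by (subst sum.swap) (simp add: sum_distrib_right)
    also have "\<dots> = (\<Sum>g\<in>B. (if e = g then V else 0) * z g I)"
      using MF e by (intro sum.cong refl) (simp add: matrix_factorisation_def)
    finally have factorisation: "(\<Sum>f\<in>B. \<Sum>g\<in>B. D e f * D f g * z g I) = V * z e I"
      using e fin by (simp add: if_distrib[of "\<lambda>x. x * _"] cong: if_cong)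
    have "d_L B par D n a b w e I = ksign par e * (?P (w e) I + ?M (w e) I) + (\<Sum>f\<in>B. D e f * w f I)"
      using e by (simp add: d_L_apply)
    also have "\<dots> = ?W * z e I + ((\<Sum>g\<in>B. ksign par e * D e g * X g) + (\<Sum>f\<in>B. ksign par f * D e f * X f))
        + (\<Sum>f\<in>B. \<Sum>g\<in>B. D e f * D f g * z g I)"
      unfolding koszul matrix by (simp add: algebra_simps)
    also have "\<dots> = (V + ?W) * z e I"
      unfolding cross factorisation by (simp add: algebra_simps)
    finally show ?thesis .
  qed
qed

lemma koszul_section_zero: "koszul_section \<phi> n b \<sigma> \<Longrightarrow> \<sigma> 0 = 0"
  unfolding koszul_section_def by (metis add_cancel_right_right add_0)

lemma sigma_X_apply: "e \<in> B \<Longrightarrow> sigma_X B \<sigma> y e = \<sigma> (y e)"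
  by (simp add: sigma_X_def)

lemma sigma_X_outside: "e \<notin> B \<Longrightarrow> sigma_X B \<sigma> y e = 0"
  by (simp add: sigma_X_def fun_eq_iff)

lemma sigma_X_carrier: "koszul_section \<phi> n b \<sigma> \<Longrightarrow> sigma_X B \<sigma> y \<in> L_carrier B n"
  by (rule L_carrierI) (auto simp: sigma_X_def koszul_section_def ext_carrier_def)

lemma sigma_X_add: "koszul_section \<phi> n b \<sigma> \<Longrightarrow> sigma_X B \<sigma> (y + y') = sigma_X B \<sigma> y + sigma_X B \<sigma> y'"
  by (simp add: sigma_X_def koszul_section_def fun_eq_iff)

lemma sigma_X_scale:
  "koszul_section \<phi> n b \<sigma> \<Longrightarrow> sigma_X B \<sigma> (\<lambda>e. \<phi> s * y e) = (\<lambda>e I. \<phi> s * sigma_X B \<sigma> y e I)"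
  by (simp add: sigma_X_def koszul_section_def fun_eq_iff)

lemma sigma_X_M_eq:
  "koszul_section \<phi> n b \<sigma> \<Longrightarrow> M_eq (seq_ideal b n) B y y' \<Longrightarrow> sigma_X B \<sigma> y = sigma_X B \<sigma> y'"
  by (auto simp: sigma_X_def koszul_section_def M_eq_def fun_eq_iff)

lemma odd_ext_delta_plus_sigma_X:
  "koszul_section \<phi> n b \<sigma> \<Longrightarrow> odd_ext B par (delta_plus n b) (sigma_X B \<sigma> y) = 0"
  by (intro ext) (simp add: odd_ext_def sigma_X_def koszul_section_def)

lemma p_map_carrier: "z \<in> L_carrier B n \<Longrightarrow> p_map z \<in> M_carrier B"
  by (simp add: p_map_def M_carrier_def ext_proj_def L_carrier_def)

lemma p_map_add: "p_map (z + w) = p_map z + p_map w"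
  by (simp add: p_map_def ext_proj_def fun_eq_iff)

lemma p_map_scale: "p_map (\<lambda>e I. c * z e I) = (\<lambda>e. c * p_map z e)"
  by (simp add: p_map_def ext_proj_def)

lemma p_map_d_L:
  assumes "finite B"
  shows "M_eq (seq_ideal b n) B (p_map (d_L B par D n a b z)) (dX_M B D (p_map z))"
  unfolding M_eq_def
proof
  fix e assume e: "e \<in> B"
  have "p_map (d_L B par D n a b z) e - dX_M B D (p_map z) e = ksign par e * delta_plus n b (z e) {}"
    using e by (simp add: d_L_apply p_map_def ext_proj_def dX_M_def delta_minus_def)
  also have "\<dots> \<in> seq_ideal b n"
    by (rule seq_ideal_mult) (simp add: delta_plus_def mult.assoc seq_ideal_combination)
  finally show "p_map (d_L B par D n a b z) e - dX_M B D (p_map z) e \<in> seq_ideal b n" .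
qed

lemma p_map_mu_map_sigma_X:
  assumes "finite B" and rep: "\<And>x. \<sigma> x {} - x \<in> seq_ideal b n"
  shows "M_eq (seq_ideal b n) B (p_map (mu_map B par D n a (sigma_X B \<sigma> y))) (dX_M B D y)"
  unfolding M_eq_def
proof
  fix e assume e: "e \<in> B"
  have "p_map (mu_map B par D n a (sigma_X B \<sigma> y)) e - dX_M B D y e = (\<Sum>g\<in>B. D e g * (\<sigma> (y g) {} - y g))"
    using e by (simp add: p_map_def ext_proj_def mu_map_def dX_L_def odd_ext_def delta_minus_def dX_M_def
        sigma_X_def sum_subtractf algebra_simps cong: sum.cong)
  also have "\<dots> \<in> seq_ideal b n"
    using assms by (intro seq_ideal_sum seq_ideal_mult) auto
  finally show "p_map (mu_map B par D n a (sigma_X B \<sigma> y)) e - dX_M B D y e \<in> seq_ideal b n" .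
qed

lemma dX_M_M_eq:
  assumes "finite B" "M_eq (seq_ideal b n) B y y'"
  shows "M_eq (seq_ideal b n) B (dX_M B D y) (dX_M B D y')"
  unfolding M_eq_def
proof
  fix e assume e: "e \<in> B"
  have "dX_M B D y e - dX_M B D y' e = (\<Sum>g\<in>B. D e g * (y g - y' g))"
    using e by (simp add: dX_M_def sum_subtractf algebra_simps)
  also have "\<dots> \<in> seq_ideal b n"
    using assms by (intro seq_ideal_sum seq_ideal_mult) (auto simp: M_eq_def)
  finally show "dX_M B D y e - dX_M B D y' e \<in> seq_ideal b n" .
qed

lemma dX_M_square:
  assumes MF: "matrix_factorisation B par D V"
  shows "M_eq (seq_ideal b n) B (dX_M B D (dX_M B D y)) (\<lambda>e. (V + (\<Sum>i<n. a i * b i)) * y e)"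
  unfolding M_eq_def
proof
  fix e assume e: "e \<in> B"
  have fin: "finite B"
    using MF by (simp add: matrix_factorisation_def)
  have "dX_M B D (dX_M B D y) e = (\<Sum>g\<in>B. D e g * (\<Sum>f\<in>B. D g f * y f))"
    using e by (simp add: dX_M_def)
  also have "\<dots> = (\<Sum>f\<in>B. (\<Sum>g\<in>B. D e g * D g f) * y f)"
    by (simp add: sum_distrib_left sum_distrib_right mult.assoc) (rule sum.swap)
  also have "\<dots> = (\<Sum>f\<in>B. (if e = f then V else 0) * y f)"
    using MF e by (intro sum.cong refl) (simp add: matrix_factorisation_def)
  also have "\<dots> = V * y e"
    using e fin by (simp add: if_distrib[of "\<lambda>x. x * _"] cong: if_cong)
  finally have "dX_M B D (dX_M B D y) e - (V + (\<Sum>i<n. a i * b i)) * y e = - ((\<Sum>i<n. a i * b i) * y e)"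
    by (simp add: algebra_simps)
  also have "\<dots> \<in> seq_ideal b n"
    by (intro seq_ideal_uminus)
      (simp add: sum_distrib_right mult.assoc mult.commute[of _ "b _"] seq_ideal_combination)
  finally show "dX_M B D (dX_M B D y) e - (V + (\<Sum>i<n. a i * b i)) * y e \<in> seq_ideal b n" .
qed

section \<open>Parity and the exterior-degree filtration\<close>

lemma L_homog_add:
  "L_homog B par q (z :: 'x \<Rightarrow> nat set \<Rightarrow> 'r::comm_ring_1) \<Longrightarrow> L_homog B par q w \<Longrightarrow> L_homog B par q (z + w)"
  by (simp add: L_homog_def)

lemma odd_ext_delta_plus_parity:
  assumes z: "L_homog B par q z"
  shows "L_homog B par (\<not> q) (odd_ext B par (delta_plus n b) z)"
  unfolding L_homog_def
proof (intro allI impI)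
  fix e and I :: "nat set" assume c: "(par e \<noteq> odd (card I)) \<noteq> (\<not> q)"
  have "z e (insert i I) = 0" if "I \<subseteq> {..<n}" "i \<in> {..<n} - I" for i
  proof -
    have "card (insert i I) = Suc (card I)"
      using that finite_subset by fastforce
    then have "(par e \<noteq> odd (card (insert i I))) \<noteq> q"
      using c by simp
    then show ?thesis
      using z unfolding L_homog_def by blast
  qed
  then show "odd_ext B par (delta_plus n b) z e I = 0"
    by (simp add: odd_ext_def delta_plus_def)
qed

lemma mu_map_parity:
  assumes MF: "matrix_factorisation B par D V" and z: "L_homog B par q z"
  shows "L_homog B par (\<not> q) (mu_map B par D n a z)"
proof -
  have "L_homog B par (\<not> q) (dX_L B D z)"
    unfolding L_homog_def
  proof (intro allI impI)
    fix e and I :: "nat set" assume c: "(par e \<noteq> odd (card I)) \<noteq> (\<not> q)"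
    have "D e g * z g I = 0" if "e \<in> B" "g \<in> B" for g
      using MF z that c by (cases "par e = par g") (auto simp: matrix_factorisation_def L_homog_def)
    then show "dX_L B D z e I = 0"
      by (simp add: dX_L_def)
  qed
  moreover have "L_homog B par (\<not> q) (odd_ext B par (delta_minus n a) z)"
    unfolding L_homog_def
  proof (intro allI impI)
    fix e and I :: "nat set" assume c: "(par e \<noteq> odd (card I)) \<noteq> (\<not> q)"
    have "z e (I - {i}) = 0" if "I \<subseteq> {..<n}" "i \<in> I" for i
    proof -
      have "card I = Suc (card (I - {i}))"
        using that finite_subset by (intro card_Suc_Diff1[symmetric]) auto
      then have "(par e \<noteq> odd (card (I - {i}))) \<noteq> q"
        using c by simp
      then show ?thesis
        using z unfolding L_homog_def by blast
    qed
    then show "odd_ext B par (delta_minus n a) z e I = 0"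
      by (simp add: odd_ext_def delta_minus_def)
  qed
  ultimately show ?thesis
    unfolding mu_map_def by (rule L_homog_add)
qed

lemma d_L_parity:
  "matrix_factorisation B par D V \<Longrightarrow> L_homog B par q z \<Longrightarrow> L_homog B par (\<not> q) (d_L B par D n a b z)"
  unfolding d_L_def by (intro L_homog_add odd_ext_delta_plus_parity mu_map_parity)

lemma dX_M_parity:
  assumes MF: "matrix_factorisation B par D V" and y: "M_homog B par q y"
  shows "M_homog B par (\<not> q) (dX_M B D y)"
  unfolding M_homog_def
proof (intro allI impI)
  fix f assume f: "par f \<noteq> (\<not> q)"
  have "D f e * y e = 0" if "f \<in> B" "e \<in> B" for e
    using MF y that f by (cases "par e = par f") (auto simp: matrix_factorisation_def M_homog_def)
  then show "dX_M B D y f = 0"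
    by (simp add: dX_M_def)
qed

lemma sigma_X_parity:
  assumes sigma: "koszul_section \<phi> n b \<sigma>" and y: "M_homog B par q y"
  shows "L_homog B par q (sigma_X B \<sigma> y)"
  unfolding L_homog_def
proof (intro allI impI)
  fix e and I :: "nat set" assume c: "(par e \<noteq> odd (card I)) \<noteq> q"
  show "sigma_X B \<sigma> y e I = 0"
  proof (cases "card I = 0")
    case True
    then have "y e = 0"
      using c y by (simp add: M_homog_def)
    then show ?thesis
      using koszul_section_zero[OF sigma] by (simp add: sigma_X_def)
  next
    case False
    then show ?thesis
      using sigma by (simp add: sigma_X_def koszul_section_def ext_homog_def)
  qed
qed

lemma p_map_parity: "L_homog B par q z \<Longrightarrow> M_homog B par q (p_map z)"
  by (simp add: L_homog_def M_homog_def p_map_def ext_proj_def)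

definition L_filtered :: "nat \<Rightarrow> ('x \<Rightarrow> nat set \<Rightarrow> 'r::zero) \<Rightarrow> bool" where
  "L_filtered k z \<longleftrightarrow> (\<forall>e I. card I < k \<longrightarrow> z e I = 0)"

lemma L_filtered_zero: "L_filtered 0 z"
  by (simp add: L_filtered_def)

lemma mu_map_filtered:
  assumes "L_filtered k z"
  shows "L_filtered k (mu_map B par D n a z)"
  unfolding L_filtered_def
proof (intro allI impI)
  fix e and I :: "nat set" assume I: "card I < k"
  have "dX_L B D z e I = 0"
    using assms I by (simp add: dX_L_def L_filtered_def)
  moreover have "delta_minus n a (z e) I = 0"
  proof (cases "I \<subseteq> {..<n}")
    case True
    then have "card (I - {i}) < k" for i
      using I finite_subset by (meson card_Diff1_le le_less_trans finite_lessThan)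
    then have "z e (I - {i}) = 0" for i
      using assms by (simp add: L_filtered_def)
    then show ?thesis
      using True by (simp add: delta_minus_def)
  qed (simp add: delta_minus_def)
  ultimately show "mu_map B par D n a z e I = 0"
    by (simp add: mu_map_def odd_ext_def)
qed

lemma p_map_filtered: "L_filtered 1 z \<Longrightarrow> p_map z = 0"
  by (simp add: L_filtered_def p_map_def ext_proj_def fun_eq_iff)

lemma L_filtered_vanish:
  assumes "z \<in> L_carrier B n" "L_filtered (Suc n) z"
  shows "z = 0"
proof (intro ext)
  fix e and I :: "nat set"
  show "z e I = 0 e I"
  proof (cases "I \<subseteq> {..<n}")
    case True
    then have "card I \<le> n"
      using card_mono[of "{..<n}" I] by simp
    then show ?thesis
      using assms(2) by (simp add: L_filtered_def)
  qed (use assms(1) in \<open>simp add: L_carrier_def\<close>)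
qed

locale ext_degree_raising =
  fixes \<phi> :: "'s::comm_ring_1 \<Rightarrow> 'r::comm_ring_1" and n :: nat and h :: "(nat set \<Rightarrow> 'r) \<Rightarrow> nat set \<Rightarrow> 'r"
  assumes h_lin: "slin_ext \<phi> n h" and h_deg: "ext_deg_minus_one n h"
begin

lemma h_carrier: "\<omega> \<in> ext_carrier n \<Longrightarrow> h \<omega> \<in> ext_carrier n"
  using h_lin by (simp add: slin_ext_def)

lemma h_add: "\<omega> \<in> ext_carrier n \<Longrightarrow> \<omega>' \<in> ext_carrier n \<Longrightarrow> h (\<omega> + \<omega>') = h \<omega> + h \<omega>'"
  using h_lin by (simp add: slin_ext_def)

lemma h_scale: "\<omega> \<in> ext_carrier n \<Longrightarrow> h (\<lambda>I. \<phi> s * \<omega> I) = (\<lambda>I. \<phi> s * h \<omega> I)"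
  using h_lin by (simp add: slin_ext_def)

lemma h_zero: "h 0 = 0"
  using h_add[OF ext_carrier_zero ext_carrier_zero] by simp

lemma h_ksign:
  assumes "\<omega> \<in> ext_carrier n"
  shows "h (\<lambda>I. ksign par e * \<omega> I) = (\<lambda>I. ksign par e * h \<omega> I)"
proof -
  have "h \<omega> + h (- \<omega>) = 0"
    using h_add[OF assms ext_carrier_uminus[OF assms]] h_zero by simp
  then have "h (- \<omega>) = - h \<omega>"
    by (simp add: add_eq_0_iff)
  moreover have "(\<lambda>I. - \<omega> I) = - \<omega>" "(\<lambda>I. - h \<omega> I) = - h \<omega>"
    by (simp_all add: fun_eq_iff)
  ultimately show ?thesis
    by (simp add: ksign_def)
qed

lemma h_sum:
  "finite K \<Longrightarrow> (\<And>j. j \<in> K \<Longrightarrow> f j \<in> ext_carrier n) \<Longrightarrow> h (sum f K) = (\<Sum>j\<in>K. h (f j))"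
proof (induction K rule: finite_induct)
  case empty
  then show ?case using h_zero by (simp add: zero_fun_def)
next
  case (insert x K)
  then have "h (f x + sum f K) = h (f x) + h (sum f K)"
    by (intro h_add ext_carrier_sum) auto
  moreover have "h (sum f K) = (\<Sum>j\<in>K. h (f j))"
    using insert by simp
  ultimately show ?case
    by (simp only: sum.insert[OF insert(1,2)])
qed

text \<open>Decompose \<open>\<omega>\<close> into homogeneous components and apply the degree hypothesis to each.\<close>
lemma h_support_shift:
  assumes \<omega>: "\<omega> \<in> ext_carrier n" and S: "\<And>I. card I \<notin> S \<Longrightarrow> \<omega> I = 0" and I: "card I \<notin> Suc ` S"
  shows "h \<omega> I = 0"
proof -
  define \<omega>_deg where "\<omega>_deg j = (\<lambda>I. if card I = j then \<omega> I else 0)" for j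
  define K where "K = {..n} \<inter> S"
  have \<omega>_deg: "\<omega>_deg j \<in> ext_carrier n" "ext_homog j (\<omega>_deg j)" for j
    using \<omega> by (auto simp: \<omega>_deg_def ext_carrier_def ext_homog_def)
  have large: "\<omega> J = 0" if "card J > n" for J
  proof -
    have "\<not> J \<subseteq> {..<n}"
      using that card_mono[of "{..<n}" J] by auto
    then show ?thesis
      using \<omega> by (simp add: ext_carrier_def)
  qed
  have "\<omega> = sum \<omega>_deg K"
  proof
    fix J
    have "sum \<omega>_deg K J = (if card J \<in> K then \<omega> J else 0)"
      by (simp add: \<omega>_deg_def K_def sum_apply)
    then show "\<omega> J = sum \<omega>_deg K J"
      using S large by (auto simp: K_def not_le)
  qed
  then have "h \<omega> I = (\<Sum>j\<in>K. h (\<omega>_deg j) I)"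
    using h_sum[of K \<omega>_deg] \<omega>_deg by (simp add: K_def sum_apply)
  also have "\<dots> = 0"
  proof (intro sum.neutral ballI)
    fix j assume "j \<in> K"
    then have "card I \<noteq> Suc j"
      using I by (auto simp: K_def)
    moreover have "ext_homog (Suc j) (h (\<omega>_deg j))"
      using h_deg \<omega>_deg by (simp add: ext_deg_minus_one_def)
    ultimately show "h (\<omega>_deg j) I = 0"
      by (simp add: ext_homog_def)
  qed
  finally show ?thesis .
qed

lemma odd_ext_h_carrier: "z \<in> L_carrier B n \<Longrightarrow> odd_ext B par h z \<in> L_carrier B n"
  by (rule odd_ext_L_carrier[OF h_carrier])

lemma odd_ext_h_add:
  "z \<in> L_carrier B n \<Longrightarrow> w \<in> L_carrier B n \<Longrightarrow> odd_ext B par h (z + w) = odd_ext B par h z + odd_ext B par h w"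
  by (rule odd_ext_add[OF h_add])

lemma odd_ext_h_scale:
  "z \<in> L_carrier B n \<Longrightarrow> odd_ext B par h (\<lambda>e I. \<phi> s * z e I) = (\<lambda>e I. \<phi> s * odd_ext B par h z e I)"
  by (intro ext) (simp add: odd_ext_def h_scale[OF L_carrier_component] algebra_simps)

lemma odd_ext_h_filtered:
  assumes z: "z \<in> L_carrier B n" and "L_filtered k z"
  shows "L_filtered (Suc k) (odd_ext B par h z)"
  unfolding L_filtered_def
proof (intro allI impI)
  fix e and I :: "nat set" assume "card I < Suc k"
  then have "h (z e) I = 0"
    using assms by (intro h_support_shift[OF L_carrier_component[OF z], of "{k..}"]) (auto simp: L_filtered_def)
  then show "odd_ext B par h z e I = 0"
    by (simp add: odd_ext_def)
qed

lemma odd_ext_h_parity: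
  assumes z: "z \<in> L_carrier B n" and q: "L_homog B par q z"
  shows "L_homog B par (\<not> q) (odd_ext B par h z)"
  unfolding L_homog_def
proof (intro allI impI)
  fix e and I :: "nat set" assume "(par e \<noteq> odd (card I)) \<noteq> (\<not> q)"
  then have "h (z e) I = 0"
    using q by (intro h_support_shift[OF L_carrier_component[OF z], of "{j. (par e \<noteq> odd j) = q}"])
      (auto simp: L_homog_def)
  then show "odd_ext B par h z e I = 0"
    by (simp add: odd_ext_def)
qed

end

section \<open>The perturbed deformation retract\<close>

lemma slin_LL_d_L: "slin_LL \<phi> B n (d_L B par D n a b)"
  unfolding slin_LL_def by (auto simp: d_L_carrier d_L_add d_L_scale)

lemma slin_MM_dX_M: "finite B \<Longrightarrow> slin_MM \<phi> (seq_ideal b n) B (dX_M B D)"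
  unfolding slin_MM_def by (auto simp: dX_M_carrier dX_M_M_eq dX_M_add dX_M_scale M_eq_refl)

lemma slin_LM_p_map: "slin_LM \<phi> (seq_ideal b n) B n p_map"
  unfolding slin_LM_def by (auto simp: p_map_carrier p_map_add p_map_scale M_eq_refl)

text \<open>\<open>s0\<close> exhibits \<open>V + W\<close> as coming from \<open>S\<close>; this is what lets the merely \<open>S\<close>-linear
  \<open>h\<close> commute with the curvature.\<close>
locale koszul_perturbation_setting = ext_degree_raising \<phi> n h
  for \<phi> :: "'s::comm_ring_1 \<Rightarrow> 'r::comm_ring_1" and n h +
  fixes a b :: "nat \<Rightarrow> 'r" and \<sigma> :: "'r \<Rightarrow> nat set \<Rightarrow> 'r"
    and B :: "'x set" and par :: "'x \<Rightarrow> bool" and D :: "'x \<Rightarrow> 'x \<Rightarrow> 'r" and V :: 'r and s0 :: 's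
  assumes sigma: "koszul_section \<phi> n b \<sigma>"
    and h_htpy: "\<omega> \<in> ext_carrier n \<Longrightarrow> delta_plus n b (h \<omega>) + h (delta_plus n b \<omega>) = \<omega> - \<sigma> (ext_proj \<omega>)"
    and h_sq: "\<omega> \<in> ext_carrier n \<Longrightarrow> h (h \<omega>) = 0"
    and h_sigma: "h (\<sigma> x) = 0"
    and MF: "matrix_factorisation B par D V"
    and potential_scalar: "\<phi> s0 = V + (\<Sum>i<n. a i * b i)"
begin

lemma finite_basis: "finite B"
  using MF by (simp add: matrix_factorisation_def)

lemma odd_ext_h_homotopy:
  assumes z: "z \<in> L_carrier B n"
  shows "odd_ext B par (delta_plus n b) (odd_ext B par h z) + odd_ext B par h (odd_ext B par (delta_plus n b) z)
    = z - sigma_X B \<sigma> (p_map z)"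
proof (intro ext)
  fix e and I :: "nat set"
  have "odd_ext B par (delta_plus n b) (odd_ext B par h z) = (\<lambda>e I. if e \<in> B then delta_plus n b (h (z e)) I else 0)"
    by (rule odd_ext_odd_ext) (simp add: delta_plus_scale)
  moreover have "odd_ext B par h (odd_ext B par (delta_plus n b) z)
      = (\<lambda>e I. if e \<in> B then h (delta_plus n b (z e)) I else 0)"
    by (rule odd_ext_odd_ext) (simp add: h_ksign[OF delta_plus_carrier])
  moreover have "delta_plus n b (h (z e)) I + h (delta_plus n b (z e)) I = (z e - \<sigma> (ext_proj (z e))) I"
    using fun_cong[OF h_htpy[OF L_carrier_component[OF z, of e]], of I] by simp
  ultimately show "(odd_ext B par (delta_plus n b) (odd_ext B par h z)
        + odd_ext B par h (odd_ext B par (delta_plus n b) z)) e I = (z - sigma_X B \<sigma> (p_map z)) e I"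
    using z by (cases "e \<in> B") (simp_all add: sigma_X_apply sigma_X_outside p_map_def L_carrierD)
qed

lemma odd_ext_h_square: "z \<in> L_carrier B n \<Longrightarrow> odd_ext B par h (odd_ext B par h z) = 0"
  by (subst odd_ext_odd_ext) (auto simp: h_ksign[OF h_carrier] h_sq L_carrier_component fun_eq_iff)

lemma odd_ext_h_sigma_X: "odd_ext B par h (sigma_X B \<sigma> y) = 0"
  by (intro ext) (simp add: odd_ext_def sigma_X_def h_sigma)

text \<open>That is, \<open>\<pi> \<sigma> = 1\<close> on \<open>R/(b)\<close>: apply the homotopy identity to \<open>x \<in> \<And>\<^sup>0F\<close>; the
  degree-\<open>0\<close> part of \<open>\<delta>\<^sub>+ (h x)\<close> lies in \<open>(b)\<close>.\<close>
lemma sigma_representative: "\<sigma> x {} - x \<in> seq_ideal b n"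
proof -
  define \<omega> where "\<omega> = (\<lambda>I :: nat set. if I = {} then x else 0)"
  have "\<omega> \<in> ext_carrier n"
    by (simp add: \<omega>_def ext_carrier_def)
  moreover have "delta_plus n b \<omega> = 0"
    by (intro ext) (simp add: delta_plus_def \<omega>_def)
  ultimately have "delta_plus n b (h \<omega>) = \<omega> - \<sigma> x"
    using h_htpy[of \<omega>] h_zero by (simp add: ext_proj_def \<omega>_def)
  then have "x - \<sigma> x {} = delta_plus n b (h \<omega>) {}"
    by (simp add: \<omega>_def)
  also have "\<dots> \<in> seq_ideal b n"
    by (simp add: delta_plus_def mult.assoc seq_ideal_combination)
  finally show ?thesis
    using seq_ideal_uminus by fastforce
qed

lemma d_L_curvature:
  assumes z: "z \<in> L_carrier B n"
  defines "d0 \<equiv> odd_ext B par (delta_plus n b)" and "\<mu> \<equiv> mu_map B par D n a"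
  shows "d0 (d0 z) + d0 (\<mu> z) + \<mu> (d0 z) + \<mu> (\<mu> z) = (\<lambda>e I. (V + (\<Sum>i<n. a i * b i)) * z e I)"
proof -
  have "d_L B par D n a b (d_L B par D n a b z) = d0 (d0 z) + d0 (\<mu> z) + (\<mu> (d0 z) + \<mu> (\<mu> z))"
    using z unfolding d_L_def d0_def \<mu>_def
    by (simp add: odd_ext_delta_plus_add mu_map_add odd_ext_delta_plus_carrier mu_map_carrier)
  then show ?thesis
    using d_L_square[OF MF z] by (simp add: add.assoc)
qed

lemma hmu_iterate_filtered:
  "z \<in> L_carrier B n \<Longrightarrow> ((\<lambda>z. odd_ext B par h (mu_map B par D n a z)) ^^ m) z \<in> L_carrier B n
    \<and> L_filtered m (((\<lambda>z. odd_ext B par h (mu_map B par D n a z)) ^^ m) z)"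
  by (induction m) (simp_all add: L_filtered_zero odd_ext_h_carrier mu_map_carrier odd_ext_h_filtered mu_map_filtered)

sublocale pert: homological_perturbation "L_carrier B n" "odd_ext B par (delta_plus n b)"
  "mu_map B par D n a" "odd_ext B par h" "\<lambda>z e I. (V + (\<Sum>i<n. a i * b i)) * z e I" "sigma_X B \<sigma>" p_map n
proof unfold_locales
  fix x :: "'x \<Rightarrow> nat set \<Rightarrow> 'r" assume x: "x \<in> L_carrier B n"
  show "p_map (odd_ext B par h x) = 0" "p_map (mu_map B par D n a (odd_ext B par h x)) = 0"
    using odd_ext_h_filtered[OF x L_filtered_zero] by (simp_all add: p_map_filtered mu_map_filtered)
  show "odd_ext B par (delta_plus n b) (odd_ext B par (delta_plus n b) x)
      + odd_ext B par (delta_plus n b) (mu_map B par D n a x)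
      + mu_map B par D n a (odd_ext B par (delta_plus n b) x) + mu_map B par D n a (mu_map B par D n a x)
      = (\<lambda>e I. (V + (\<Sum>i<n. a i * b i)) * x e I)"
    using d_L_curvature[OF x] by simp
  show "odd_ext B par h (\<lambda>e I. (V + (\<Sum>i<n. a i * b i)) * x e I)
      = (\<lambda>e I. (V + (\<Sum>i<n. a i * b i)) * odd_ext B par h x e I)"
    using odd_ext_h_scale[OF x, where s=s0] potential_scalar by simp
  fix y :: "'x \<Rightarrow> nat set \<Rightarrow> 'r"
  show "(\<lambda>e I. (V + (\<Sum>i<n. a i * b i)) * (x + y) e I)
      = (\<lambda>e I. (V + (\<Sum>i<n. a i * b i)) * x e I) + (\<lambda>e I. (V + (\<Sum>i<n. a i * b i)) * y e I)"
    by (simp add: fun_eq_iff algebra_simps)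
  show "((\<lambda>z. odd_ext B par h (mu_map B par D n a z)) ^^ Suc n) x = 0"
    using hmu_iterate_filtered[OF x, of "Suc n"] L_filtered_vanish by blast
qed (simp_all add: L_carrier_zero L_carrier_add L_carrier_uminus L_carrier_scale odd_ext_delta_plus_carrier
    odd_ext_delta_plus_add mu_map_carrier mu_map_add odd_ext_h_carrier odd_ext_h_add
    sigma_X_carrier[OF sigma] sigma_X_add[OF sigma] p_map_add odd_ext_delta_plus_square
    odd_ext_delta_plus_sigma_X[OF sigma] odd_ext_h_homotopy odd_ext_h_square odd_ext_h_sigma_X)

lemma sigma_inf_eq_neumann: "sigma_inf B par D n a h \<sigma> = (\<lambda>y. pert.neumann (sigma_X B \<sigma> y))"
proof
  fix y
  have hmu_eq: "odd_ext B par h \<circ> mu_map B par D n a = pert.hmu"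
    by (simp add: fun_eq_iff pert.hmu_def)
  show "sigma_inf B par D n a h \<sigma> y = pert.neumann (sigma_X B \<sigma> y)"
    unfolding sigma_inf_def pert.neumann_def hmu_eq
    by (intro sum.cong) (auto simp: minus_one_pow_def fun_eq_iff)
qed

lemma neumann_scale:
  assumes "z \<in> L_carrier B n"
  shows "pert.neumann (\<lambda>e I. \<phi> s * z e I) = (\<lambda>e I. \<phi> s * pert.neumann z e I)"
  by (rule pert.neumann_commute[where f="\<lambda>z e I. \<phi> s * z e I", OF _ _ _ assms])
    (simp_all add: L_carrier_scale fun_eq_iff algebra_simps pert.hmu_def mu_map_scale
      odd_ext_h_scale mu_map_carrier)

lemma neumann_parity:
  assumes "z \<in> L_carrier B n" "L_homog B par q z"
  shows "L_homog B par q (pert.neumann z)"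
proof (rule pert.neumann_preserves[where P="L_homog B par q", OF _ _ _ _ assms])
  fix w :: "'x \<Rightarrow> nat set \<Rightarrow> 'r" assume "w \<in> L_carrier B n" "L_homog B par q w"
  then show "L_homog B par q (pert.hmu w)"
    using odd_ext_h_parity[OF mu_map_carrier mu_map_parity[OF MF]] by (fastforce simp: pert.hmu_def)
qed (auto simp: L_homog_def)

lemma slin_ML_neumann_sigma_X: "slin_ML \<phi> (seq_ideal b n) B n (\<lambda>y. pert.neumann (sigma_X B \<sigma> y))"
  unfolding slin_ML_def
  by (auto simp: pert.neumann_L sigma_X_carrier[OF sigma] sigma_X_M_eq[OF sigma] sigma_X_add[OF sigma]
      pert.neumann_add sigma_X_scale[OF sigma] neumann_scale)

lemma d_L_neumann_sigma_X:
  "d_L B par D n a b (pert.neumann (sigma_X B \<sigma> y)) = pert.neumann (sigma_X B \<sigma> (dX_M B D y))"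
  using pert.neumann_chain_map[of y]
    sigma_X_M_eq[OF sigma p_map_mu_map_sigma_X[where \<sigma>=\<sigma> and b=b and n=n, OF finite_basis sigma_representative]]
  by (simp add: d_L_def)

lemma p_map_neumann_sigma_X: "M_eq (seq_ideal b n) B (p_map (pert.neumann (sigma_X B \<sigma> y))) y"
proof -
  have "p_map (pert.neumann (sigma_X B \<sigma> y)) = p_map (sigma_X B \<sigma> y)"
    by (rule pert.p_neumann[OF sigma_X_carrier[OF sigma]])
  then show ?thesis
    using sigma_representative by (simp add: M_eq_def p_map_def ext_proj_def sigma_X_apply)
qed

lemma slin_LL_neumann_h: "slin_LL \<phi> B n (\<lambda>z. pert.neumann (odd_ext B par h z))"
  unfolding slin_LL_def
  by (auto simp: pert.neumann_L odd_ext_h_carrier odd_ext_h_add pert.neumann_add odd_ext_h_scale neumann_scale)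

lemma neumann_h_homotopy:
  "z \<in> L_carrier B n \<Longrightarrow> d_L B par D n a b (pert.neumann (odd_ext B par h z))
     + pert.neumann (odd_ext B par h (d_L B par D n a b z)) = z - pert.neumann (sigma_X B \<sigma> (p_map z))"
  using pert.neumann_homotopy by (simp add: d_L_def)

lemma retract_datum_sigma_inf:
  "retract_datum \<phi> (seq_ideal b n) B par n (V + (\<Sum>i<n. a i * b i))
     (d_L B par D n a b) (dX_M B D) (sigma_inf B par D n a h \<sigma>) p_map
     (\<lambda>z. pert.neumann (odd_ext B par h z))"
  unfolding retract_datum_def sigma_inf_eq_neumann
  by (simp add: slin_LL_d_L d_L_parity[OF MF] d_L_square[OF MF] slin_MM_dX_M[OF finite_basis]
      dX_M_parity[OF MF] dX_M_square[OF MF] slin_ML_neumann_sigma_X neumann_parity sigma_X_carrier[OF sigma]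
      sigma_X_parity[OF sigma] d_L_neumann_sigma_X slin_LM_p_map p_map_parity p_map_d_L[OF finite_basis]
      p_map_neumann_sigma_X slin_LL_neumann_h odd_ext_h_carrier odd_ext_h_parity neumann_h_homotopy)

end

theorem propositionD1:
  fixes \<phi> :: "'s::comm_ring_1 \<Rightarrow> 'r::comm_ring_1"
    and n :: nat and a b :: "nat \<Rightarrow> 'r" and W :: 'r
    and \<sigma> :: "'r \<Rightarrow> nat set \<Rightarrow> 'r"
    and h :: "(nat set \<Rightarrow> 'r) \<Rightarrow> nat set \<Rightarrow> 'r"
    and B :: "'x set" and par :: "'x \<Rightarrow> bool" and D :: "'x \<Rightarrow> 'x \<Rightarrow> 'r" and V :: 'r
  assumes hom: "ring_hom_into \<phi>"
    and noeth: "noetherian_ring TYPE('r)"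
    and reg: "regular_seq b n"
    and W_def: "W = (\<Sum>i<n. a i * b i)"
    and sigma: "koszul_section \<phi> n b \<sigma>"
    and h_lin: "slin_ext \<phi> n h"
    and h_deg: "ext_deg_minus_one n h"
    and h_htpy: "\<forall>\<omega>\<in>ext_carrier n.
                   delta_plus n b (h \<omega>) + h (delta_plus n b \<omega>) = \<omega> - \<sigma> (ext_proj \<omega>)"
    and h_sq: "\<forall>\<omega>\<in>ext_carrier n. h (h \<omega>) = 0"
    and h_sigma: "\<forall>x. h (\<sigma> x) = 0"
    and MF: "matrix_factorisation B par D V"
    and VW: "\<exists>s0. \<phi> s0 = V + W"
  shows "\<exists>h_inf. retract_datum \<phi> (seq_ideal b n) B par n (V + W)
            (d_L B par D n a b) (dX_M B D) (sigma_inf B par D n a h \<sigma>) p_map h_inf"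
proof -
  obtain s0 where "\<phi> s0 = V + (\<Sum>i<n. a i * b i)"
    using VW W_def by blast
  then interpret koszul_perturbation_setting \<phi> n h a b \<sigma> B par D V s0
    using sigma h_lin h_deg h_htpy h_sq h_sigma MF by unfold_locales auto
  show ?thesis
    using retract_datum_sigma_inf W_def by blast
qed

end
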